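(* ($\mathrm{ZFCU}_R$) Let $\mathcal{I}$ be an $\mathcal{A}$-ideal and let $U^{\mathcal{I}}=\{x: ker(x)\in\mathcal{I}\}$. Then $U^{\mathcal{I}}\models\mathrm{ZFCU}_R+$ "$\mathcal{A}$ is a proper class".
   Context: $\mathrm{ZFCU}_R$ is ZFC with urelements (language $\{\in,\mathcal{A}\}$, $\mathcal{A}$ the urelement predicate), formulated with Replacement rather than Collection, with AC. $ker(x)$ is the set of urelements in the transitive closure of $\{x\}$ (so $ker(a)=\{a\}$ for a urelement $a$). An $\mathcal{A}$-ideal is a (definable) class $\mathcal{I}$ of sets of urelements such that: if the class $\mathcal{A}$ of all urelements is a set then $\mathcal{A}\notin\mathcal{I}$; $\mathcal{I}$ is closed under finite unions and subsets; and $\{a\}\in\mathcal{I}$ for every urelement $a$. "$\mathcal{A}$ is a proper class" means no set contains exactly the urelements. *)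

theory Defs
  imports Main
begin

datatype fm =
    Mem nat nat
  | Equ nat nat
  | Urel nat
  | Neg fm
  | Conj fm fm
  | Ex nat fm

fun sat :: "'a set \<Rightarrow> ('a \<Rightarrow> 'a \<Rightarrow> bool) \<Rightarrow> ('a \<Rightarrow> bool) \<Rightarrow> (nat \<Rightarrow> 'a) \<Rightarrow> fm \<Rightarrow> bool" where
  "sat D E Ur env (Mem i j) = E (env i) (env j)"
| "sat D E Ur env (Equ i j) = (env i = env j)"
| "sat D E Ur env (Urel i) = Ur (env i)"
| "sat D E Ur env (Neg p) = (\<not> sat D E Ur env p)"
| "sat D E Ur env (Conj p q) = (sat D E Ur env p \<and> sat D E Ur env q)"
| "sat D E Ur env (Ex i p) = (\<exists>d\<in>D. sat D E Ur (env(i := d)) p)"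

definition ax_urelements :: "'a set \<Rightarrow> ('a \<Rightarrow> 'a \<Rightarrow> bool) \<Rightarrow> ('a \<Rightarrow> bool) \<Rightarrow> bool" where
  "ax_urelements D E Ur \<longleftrightarrow> (\<forall>a\<in>D. Ur a \<longrightarrow> (\<forall>z\<in>D. \<not> E z a))"

definition ax_extensionality :: "'a set \<Rightarrow> ('a \<Rightarrow> 'a \<Rightarrow> bool) \<Rightarrow> ('a \<Rightarrow> bool) \<Rightarrow> bool" where
  "ax_extensionality D E Ur \<longleftrightarrow>
     (\<forall>x\<in>D. \<forall>y\<in>D. \<not> Ur x \<longrightarrow> \<not> Ur y \<longrightarrow> (\<forall>z\<in>D. E z x \<longleftrightarrow> E z y) \<longrightarrow> x = y)"

definition ax_foundation :: "'a set \<Rightarrow> ('a \<Rightarrow> 'a \<Rightarrow> bool) \<Rightarrow> ('a \<Rightarrow> bool) \<Rightarrow> bool" where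
  "ax_foundation D E Ur \<longleftrightarrow>
     (\<forall>x\<in>D. (\<exists>y\<in>D. E y x) \<longrightarrow> (\<exists>y\<in>D. E y x \<and> \<not> (\<exists>z\<in>D. E z y \<and> E z x)))"

definition ax_pairing :: "'a set \<Rightarrow> ('a \<Rightarrow> 'a \<Rightarrow> bool) \<Rightarrow> ('a \<Rightarrow> bool) \<Rightarrow> bool" where
  "ax_pairing D E Ur \<longleftrightarrow>
     (\<forall>x\<in>D. \<forall>y\<in>D. \<exists>p\<in>D. \<not> Ur p \<and> (\<forall>z\<in>D. E z p \<longleftrightarrow> (z = x \<or> z = y)))"

definition ax_union :: "'a set \<Rightarrow> ('a \<Rightarrow> 'a \<Rightarrow> bool) \<Rightarrow> ('a \<Rightarrow> bool) \<Rightarrow> bool" where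
  "ax_union D E Ur \<longleftrightarrow>
     (\<forall>x\<in>D. \<not> Ur x \<longrightarrow> (\<exists>u\<in>D. \<not> Ur u \<and> (\<forall>z\<in>D. E z u \<longleftrightarrow> (\<exists>y\<in>D. E y x \<and> E z y))))"

definition ax_powerset :: "'a set \<Rightarrow> ('a \<Rightarrow> 'a \<Rightarrow> bool) \<Rightarrow> ('a \<Rightarrow> bool) \<Rightarrow> bool" where
  "ax_powerset D E Ur \<longleftrightarrow>
     (\<forall>x\<in>D. \<not> Ur x \<longrightarrow> (\<exists>p\<in>D. \<not> Ur p \<and>
        (\<forall>y\<in>D. E y p \<longleftrightarrow> (\<not> Ur y \<and> (\<forall>z\<in>D. E z y \<longrightarrow> E z x)))))"

definition ax_infinity :: "'a set \<Rightarrow> ('a \<Rightarrow> 'a \<Rightarrow> bool) \<Rightarrow> ('a \<Rightarrow> bool) \<Rightarrow> bool" where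
  "ax_infinity D E Ur \<longleftrightarrow>
     (\<exists>w\<in>D. \<not> Ur w
        \<and> (\<exists>e\<in>D. \<not> Ur e \<and> (\<forall>z\<in>D. \<not> E z e) \<and> E e w)
        \<and> (\<forall>y\<in>D. E y w \<longrightarrow>
              (\<exists>s\<in>D. \<not> Ur s \<and> E s w \<and> (\<forall>z\<in>D. E z s \<longleftrightarrow> (E z y \<or> z = y)))))"

text \<open>Separation schema: one instance per formula, with arbitrary parameters
(the variable 0 of the formula is the separated variable).\<close>

definition ax_separation :: "'a set \<Rightarrow> ('a \<Rightarrow> 'a \<Rightarrow> bool) \<Rightarrow> ('a \<Rightarrow> bool) \<Rightarrow> bool" where
  "ax_separation D E Ur \<longleftrightarrow>
     (\<forall>\<phi> env. range env \<subseteq> D \<longrightarrow>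
        (\<forall>x\<in>D. \<not> Ur x \<longrightarrow>
           (\<exists>y\<in>D. \<not> Ur y \<and> (\<forall>z\<in>D. E z y \<longleftrightarrow> (E z x \<and> sat D E Ur (env(0 := z)) \<phi>)))))"

text \<open>Replacement schema: variables 0 and 1 of the formula are the argument and the
value; the others are parameters.\<close>

definition ax_replacement :: "'a set \<Rightarrow> ('a \<Rightarrow> 'a \<Rightarrow> bool) \<Rightarrow> ('a \<Rightarrow> bool) \<Rightarrow> bool" where
  "ax_replacement D E Ur \<longleftrightarrow>
     (\<forall>\<phi> env. range env \<subseteq> D \<longrightarrow>
        (\<forall>x\<in>D. \<not> Ur x \<longrightarrow>
           (\<forall>u\<in>D. E u x \<longrightarrow>
               (\<exists>v\<in>D. sat D E Ur (env(0 := u, 1 := v)) \<phi>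
                  \<and> (\<forall>v'\<in>D. sat D E Ur (env(0 := u, 1 := v')) \<phi> \<longrightarrow> v' = v))) \<longrightarrow>
           (\<exists>y\<in>D. \<not> Ur y \<and>
               (\<forall>v\<in>D. E v y \<longleftrightarrow> (\<exists>u\<in>D. E u x \<and> sat D E Ur (env(0 := u, 1 := v)) \<phi>)))))"

definition ax_choice :: "'a set \<Rightarrow> ('a \<Rightarrow> 'a \<Rightarrow> bool) \<Rightarrow> ('a \<Rightarrow> bool) \<Rightarrow> bool" where
  "ax_choice D E Ur \<longleftrightarrow>
     (\<forall>x\<in>D. \<not> Ur x \<longrightarrow>
        (\<forall>y\<in>D. E y x \<longrightarrow> \<not> Ur y \<and> (\<exists>z\<in>D. E z y)) \<longrightarrow>
        (\<forall>y1\<in>D. \<forall>y2\<in>D. E y1 x \<longrightarrow> E y2 x \<longrightarrow> y1 \<noteq> y2 \<longrightarrow> \<not> (\<exists>z\<in>D. E z y1 \<and> E z y2)) \<longrightarrow>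
        (\<exists>c\<in>D. \<not> Ur c \<and>
           (\<forall>y\<in>D. E y x \<longrightarrow>
              (\<exists>z\<in>D. E z c \<and> E z y \<and> (\<forall>z'\<in>D. E z' c \<longrightarrow> E z' y \<longrightarrow> z' = z)))))"

definition ZFCU_R :: "'a set \<Rightarrow> ('a \<Rightarrow> 'a \<Rightarrow> bool) \<Rightarrow> ('a \<Rightarrow> bool) \<Rightarrow> bool" where
  "ZFCU_R D E Ur \<longleftrightarrow> D \<noteq> {}
     \<and> ax_urelements D E Ur \<and> ax_extensionality D E Ur \<and> ax_foundation D E Ur
     \<and> ax_pairing D E Ur \<and> ax_union D E Ur \<and> ax_powerset D E Ur \<and> ax_infinity D E Ur
     \<and> ax_separation D E Ur \<and> ax_replacement D E Ur \<and> ax_choice D E Ur"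

definition A_proper_class :: "'a set \<Rightarrow> ('a \<Rightarrow> 'a \<Rightarrow> bool) \<Rightarrow> ('a \<Rightarrow> bool) \<Rightarrow> bool" where
  "A_proper_class D E Ur \<longleftrightarrow> \<not> (\<exists>s\<in>D. \<not> Ur s \<and> (\<forall>a\<in>D. E a s \<longleftrightarrow> Ur a))"

definition is_transitive :: "'a set \<Rightarrow> ('a \<Rightarrow> 'a \<Rightarrow> bool) \<Rightarrow> ('a \<Rightarrow> bool) \<Rightarrow> 'a \<Rightarrow> bool" where
  "is_transitive D E Ur t \<longleftrightarrow> \<not> Ur t \<and>
     (\<forall>y\<in>D. E y t \<longrightarrow> \<not> Ur y \<longrightarrow> (\<forall>z\<in>D. E z y \<longrightarrow> E z t))"

definition is_TC_singleton :: "'a set \<Rightarrow> ('a \<Rightarrow> 'a \<Rightarrow> bool) \<Rightarrow> ('a \<Rightarrow> bool) \<Rightarrow> 'a \<Rightarrow> 'a \<Rightarrow> bool" where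
  "is_TC_singleton D E Ur x t \<longleftrightarrow> is_transitive D E Ur t \<and> E x t \<and>
     (\<forall>t'\<in>D. is_transitive D E Ur t' \<longrightarrow> E x t' \<longrightarrow> (\<forall>z\<in>D. E z t \<longrightarrow> E z t'))"

definition is_ker :: "'a set \<Rightarrow> ('a \<Rightarrow> 'a \<Rightarrow> bool) \<Rightarrow> ('a \<Rightarrow> bool) \<Rightarrow> 'a \<Rightarrow> 'a \<Rightarrow> bool" where
  "is_ker D E Ur x k \<longleftrightarrow> \<not> Ur k \<and>
     (\<exists>t\<in>D. is_TC_singleton D E Ur x t \<and> (\<forall>a\<in>D. E a k \<longleftrightarrow> (E a t \<and> Ur a)))"

text \<open>A-ideal (a class I given by a predicate on the domain).  Following the usual
convention that ideals are nonempty, we also require I to be nonempty.\<close>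

definition is_A_ideal :: "'a set \<Rightarrow> ('a \<Rightarrow> 'a \<Rightarrow> bool) \<Rightarrow> ('a \<Rightarrow> bool) \<Rightarrow> ('a \<Rightarrow> bool) \<Rightarrow> bool" where
  "is_A_ideal D E Ur I \<longleftrightarrow>
     (\<exists>k\<in>D. I k)
     \<and> (\<forall>k\<in>D. I k \<longrightarrow> \<not> Ur k \<and> (\<forall>y\<in>D. E y k \<longrightarrow> Ur y))
     \<and> (\<forall>s\<in>D. (\<not> Ur s \<and> (\<forall>a\<in>D. E a s \<longleftrightarrow> Ur a)) \<longrightarrow> \<not> I s)
     \<and> (\<forall>x\<in>D. \<forall>y\<in>D. \<forall>u\<in>D. I x \<longrightarrow> I y \<longrightarrow> \<not> Ur u \<longrightarrow>
           (\<forall>z\<in>D. E z u \<longleftrightarrow> (E z x \<or> E z y)) \<longrightarrow> I u)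
     \<and> (\<forall>x\<in>D. \<forall>y\<in>D. I x \<longrightarrow> \<not> Ur y \<longrightarrow> (\<forall>z\<in>D. E z y \<longrightarrow> E z x) \<longrightarrow> I y)
     \<and> (\<forall>a\<in>D. \<forall>s\<in>D. Ur a \<longrightarrow> \<not> Ur s \<longrightarrow> (\<forall>z\<in>D. E z s \<longleftrightarrow> z = a) \<longrightarrow> I s)"

definition U_I :: "'a set \<Rightarrow> ('a \<Rightarrow> 'a \<Rightarrow> bool) \<Rightarrow> ('a \<Rightarrow> bool) \<Rightarrow> ('a \<Rightarrow> bool) \<Rightarrow> 'a set" where
  "U_I D E Ur I = {x\<in>D. \<exists>k\<in>D. is_ker D E Ur x k \<and> I k}"

end

theory Submission
  imports Defs
begin

text \<open>The kernel of a set is the union of the kernels of its members, and I is closed under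
  finite unions and subsets; hence U^I is closed under pairing, union, power set, separation and
  choice.  It contains every urelement and all pure sets, but no set of all urelements, since no
  member of I contains them all.

  Replacement is where symmetry enters.  The image of a set of U^I under a function definable
  in U^I exists in the universe; the point is that its kernel lies in I.  For urelements c and
  c', recursion along membership, carried out with set-sized bisimulations, yields an
  automorphism of U^I swapping c and c'.  If a value v had in its kernel an urelement a outside
  the kernels of the argument set and of the parameters, the automorphism swapping a with a
  fresh urelement would fix the arguments and the parameters, hence the unique value v, while
  sending a in the kernel of v to the fresh urelement.\<close>

definition Or :: "fm \<Rightarrow> fm \<Rightarrow> fm" where "Or p q = Neg (Conj (Neg p) (Neg q))"
definition Imp :: "fm \<Rightarrow> fm \<Rightarrow> fm" where "Imp p q = Neg (Conj p (Neg q))"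
definition Iff :: "fm \<Rightarrow> fm \<Rightarrow> fm" where "Iff p q = Conj (Imp p q) (Imp q p)"
definition All :: "nat \<Rightarrow> fm \<Rightarrow> fm" where "All i p = Neg (Ex i (Neg p))"

lemma sat_Or [simp]: "sat D E Ur env (Or p q) = (sat D E Ur env p \<or> sat D E Ur env q)"
  by (simp add: Or_def)

lemma sat_Imp [simp]: "sat D E Ur env (Imp p q) = (sat D E Ur env p \<longrightarrow> sat D E Ur env q)"
  by (simp add: Imp_def)

lemma sat_Iff [simp]: "sat D E Ur env (Iff p q) = (sat D E Ur env p \<longleftrightarrow> sat D E Ur env q)"
  by (auto simp add: Iff_def)

lemma sat_All [simp]: "sat D E Ur env (All i p) = (\<forall>d\<in>D. sat D E Ur (env(i := d)) p)"
  by (simp add: All_def)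

fun fv :: "fm \<Rightarrow> nat set" where
  "fv (Mem i j) = {i, j}"
| "fv (Equ i j) = {i, j}"
| "fv (Urel i) = {i}"
| "fv (Neg q) = fv q"
| "fv (Conj q r) = fv q \<union> fv r"
| "fv (Ex i q) = fv q - {i}"

lemma finite_fv: "finite (fv q)"
  by (induction q) auto

lemma sat_cong_fv: "(\<forall>i\<in>fv q. e i = e' i) \<Longrightarrow> sat S E Ur e q = sat S E Ur e' q"
proof (induction q arbitrary: e e')
  case (Ex i q)
  have "\<And>d. \<forall>j\<in>fv q. (e(i := d)) j = (e'(i := d)) j" using Ex.prems by auto
  then show ?case using Ex.IH by (simp only: sat.simps) blast
next
  case (Conj q r)
  then show ?case by (metis UnCI fv.simps(5) sat.simps(5))
qed auto

fun rename :: "(nat \<Rightarrow> nat) \<Rightarrow> fm \<Rightarrow> fm" where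
  "rename f (Mem i j) = Mem (f i) (f j)"
| "rename f (Equ i j) = Equ (f i) (f j)"
| "rename f (Urel i) = Urel (f i)"
| "rename f (Neg q) = Neg (rename f q)"
| "rename f (Conj q r) = Conj (rename f q) (rename f r)"
| "rename f (Ex i q) = Ex (f i) (rename f q)"

lemma sat_rename: "inj f \<Longrightarrow> sat D E Ur e (rename f q) = sat D E Ur (e \<circ> f) q"
proof (induction q arbitrary: e)
  case (Ex i q)
  have "\<And>d. (e(f i := d)) \<circ> f = (e \<circ> f)(i := d)"
    using Ex.prems by (auto simp: fun_eq_iff inj_eq)
  then show ?case by (simp only: rename.simps sat.simps Ex.IH[OF Ex.prems])
qed simp_all

lemma range_fun_upd_subset: "range env \<subseteq> S \<Longrightarrow> d \<in> S \<Longrightarrow> range (env(i := d)) \<subseteq> S"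
  by (auto simp: image_def)

locale zfcu_model =
  fixes D :: "'a set" and E :: "'a \<Rightarrow> 'a \<Rightarrow> bool" and Ur :: "'a \<Rightarrow> bool"
  assumes ZFCU_R: "ZFCU_R D E Ur"
begin

lemma urelement_no_members: "a \<in> D \<Longrightarrow> Ur a \<Longrightarrow> z \<in> D \<Longrightarrow> \<not> E z a"
  using ZFCU_R by (auto simp add: ZFCU_R_def ax_urelements_def)

lemma not_Ur_if_member: "x \<in> D \<Longrightarrow> v \<in> D \<Longrightarrow> E v x \<Longrightarrow> \<not> Ur x"
  using urelement_no_members by blast

lemma extensionality:
  "x \<in> D \<Longrightarrow> y \<in> D \<Longrightarrow> \<not> Ur x \<Longrightarrow> \<not> Ur y \<Longrightarrow> (\<And>z. z \<in> D \<Longrightarrow> E z x \<longleftrightarrow> E z y) \<Longrightarrow> x = y"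
  using ZFCU_R unfolding ZFCU_R_def ax_extensionality_def by blast

lemma foundation: "x \<in> D \<Longrightarrow> y0 \<in> D \<Longrightarrow> E y0 x \<Longrightarrow> \<exists>y\<in>D. E y x \<and> \<not> (\<exists>z\<in>D. E z y \<and> E z x)"
  using ZFCU_R unfolding ZFCU_R_def ax_foundation_def by blast

lemma pairing: "x \<in> D \<Longrightarrow> y \<in> D \<Longrightarrow> \<exists>p\<in>D. \<not> Ur p \<and> (\<forall>z\<in>D. E z p \<longleftrightarrow> (z = x \<or> z = y))"
  using ZFCU_R unfolding ZFCU_R_def ax_pairing_def by blast

lemma union: "x \<in> D \<Longrightarrow> \<not> Ur x \<Longrightarrow> \<exists>u\<in>D. \<not> Ur u \<and> (\<forall>z\<in>D. E z u \<longleftrightarrow> (\<exists>y\<in>D. E y x \<and> E z y))"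
  using ZFCU_R unfolding ZFCU_R_def ax_union_def by blast

lemma powerset: "x \<in> D \<Longrightarrow> \<not> Ur x \<Longrightarrow>
    \<exists>p\<in>D. \<not> Ur p \<and> (\<forall>y\<in>D. E y p \<longleftrightarrow> (\<not> Ur y \<and> (\<forall>z\<in>D. E z y \<longrightarrow> E z x)))"
  using ZFCU_R unfolding ZFCU_R_def ax_powerset_def by blast

lemma infinity: "ax_infinity D E Ur"
  using ZFCU_R unfolding ZFCU_R_def by blast

lemma separation: "range env \<subseteq> D \<Longrightarrow> x \<in> D \<Longrightarrow> \<not> Ur x \<Longrightarrow>
    \<exists>y\<in>D. \<not> Ur y \<and> (\<forall>z\<in>D. E z y \<longleftrightarrow> (E z x \<and> sat D E Ur (env(0 := z)) \<phi>))"
  using ZFCU_R unfolding ZFCU_R_def ax_separation_def by blast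

lemma replacement: "range env \<subseteq> D \<Longrightarrow> x \<in> D \<Longrightarrow> \<not> Ur x \<Longrightarrow>
    (\<And>u. u \<in> D \<Longrightarrow> E u x \<Longrightarrow> \<exists>v\<in>D. sat D E Ur (env(0 := u, 1 := v)) \<phi>
        \<and> (\<forall>v'\<in>D. sat D E Ur (env(0 := u, 1 := v')) \<phi> \<longrightarrow> v' = v)) \<Longrightarrow>
    \<exists>y\<in>D. \<not> Ur y \<and> (\<forall>v\<in>D. E v y \<longleftrightarrow> (\<exists>u\<in>D. E u x \<and> sat D E Ur (env(0 := u, 1 := v)) \<phi>))"
  using ZFCU_R unfolding ZFCU_R_def ax_replacement_def by blast

lemma choice: "ax_choice D E Ur"
  using ZFCU_R unfolding ZFCU_R_def by blast

lemma singleton: "a \<in> D \<Longrightarrow> \<exists>s\<in>D. \<not> Ur s \<and> (\<forall>z\<in>D. E z s \<longleftrightarrow> z = a)"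
  using pairing[of a a] by auto

lemma binary_union: "x \<in> D \<Longrightarrow> y \<in> D \<Longrightarrow> \<not> Ur x \<Longrightarrow> \<not> Ur y \<Longrightarrow>
    \<exists>u\<in>D. \<not> Ur u \<and> (\<forall>z\<in>D. E z u \<longleftrightarrow> (E z x \<or> E z y))"
proof -
  assume xy: "x \<in> D" "y \<in> D" "\<not> Ur x" "\<not> Ur y"
  obtain p where p: "p \<in> D" "\<not> Ur p" "\<forall>z\<in>D. E z p \<longleftrightarrow> (z = x \<or> z = y)"
    using pairing[OF xy(1,2)] by blast
  obtain u where "u \<in> D" "\<not> Ur u" "\<forall>z\<in>D. E z u \<longleftrightarrow> (\<exists>w\<in>D. E w p \<and> E z w)"
    using union[OF p(1,2)] by blast
  moreover have "(\<exists>w\<in>D. E w p \<and> E z w) \<longleftrightarrow> (E z x \<or> E z y)" if "z \<in> D" for z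
    using p xy that by auto
  ultimately show ?thesis by blast
qed

definition is_pair :: "'a \<Rightarrow> 'a \<Rightarrow> 'a \<Rightarrow> bool" where
  "is_pair q a b \<longleftrightarrow> \<not> Ur q \<and> (\<forall>x\<in>D. E x q \<longleftrightarrow>
     (\<not> Ur x \<and> ((\<forall>y\<in>D. E y x \<longleftrightarrow> y = a) \<or> (\<forall>y\<in>D. E y x \<longleftrightarrow> (y = a \<or> y = b)))))"

lemma is_pairD: "is_pair q a b \<Longrightarrow> x \<in> D \<Longrightarrow> E x q \<longleftrightarrow>
    (\<not> Ur x \<and> ((\<forall>y\<in>D. E y x \<longleftrightarrow> y = a) \<or> (\<forall>y\<in>D. E y x \<longleftrightarrow> (y = a \<or> y = b))))"
  unfolding is_pair_def by blast

lemma pair_exists: assumes "a \<in> D" "b \<in> D" shows "\<exists>q\<in>D. is_pair q a b"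
proof -
  obtain s where s: "s \<in> D" "\<not> Ur s" "\<forall>z\<in>D. E z s \<longleftrightarrow> z = a"
    using singleton[OF assms(1)] by blast
  obtain d where d: "d \<in> D" "\<not> Ur d" "\<forall>z\<in>D. E z d \<longleftrightarrow> (z = a \<or> z = b)"
    using pairing[OF assms] by blast
  obtain q where q: "q \<in> D" "\<not> Ur q" "\<forall>z\<in>D. E z q \<longleftrightarrow> (z = s \<or> z = d)"
    using pairing[OF s(1) d(1)] by blast
  have "E x q \<longleftrightarrow> (\<not> Ur x \<and> ((\<forall>y\<in>D. E y x \<longleftrightarrow> y = a) \<or> (\<forall>y\<in>D. E y x \<longleftrightarrow> (y = a \<or> y = b))))"
    if x: "x \<in> D" for x
  proof
    assume "E x q"
    then have "x = s \<or> x = d" using q(3) x by blast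
    then show "\<not> Ur x \<and> ((\<forall>y\<in>D. E y x \<longleftrightarrow> y = a) \<or> (\<forall>y\<in>D. E y x \<longleftrightarrow> (y = a \<or> y = b)))"
      using s d by blast
  next
    assume "\<not> Ur x \<and> ((\<forall>y\<in>D. E y x \<longleftrightarrow> y = a) \<or> (\<forall>y\<in>D. E y x \<longleftrightarrow> (y = a \<or> y = b)))"
    then have "x = s \<or> x = d"
      using extensionality[OF x s(1)] extensionality[OF x d(1)] s d by metis
    then show "E x q" using q(3) x by blast
  qed
  then show ?thesis unfolding is_pair_def using q(1,2) by blast
qed

lemma pair_unique: "q \<in> D \<Longrightarrow> q' \<in> D \<Longrightarrow> is_pair q a b \<Longrightarrow> is_pair q' a b \<Longrightarrow> q = q'"
  by (rule extensionality) (simp_all add: is_pairD, auto simp: is_pair_def)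

lemma pair_inject:
  assumes "q \<in> D" "a \<in> D" "b \<in> D" "a' \<in> D" "b' \<in> D" "is_pair q a b" "is_pair q a' b'"
  shows "a = a' \<and> b = b'"
proof -
  obtain s where s: "s \<in> D" "\<not> Ur s" "\<forall>z\<in>D. E z s \<longleftrightarrow> z = a"
    using singleton[OF assms(2)] by blast
  obtain d where d: "d \<in> D" "\<not> Ur d" "\<forall>z\<in>D. E z d \<longleftrightarrow> (z = a \<or> z = b)"
    using pairing[OF assms(2,3)] by blast
  obtain d' where d': "d' \<in> D" "\<not> Ur d'" "\<forall>z\<in>D. E z d' \<longleftrightarrow> (z = a' \<or> z = b')"
    using pairing[OF assms(4,5)] by blast
  have "E s q" using is_pairD[OF assms(6) s(1)] s by blast
  then have "(\<forall>y\<in>D. E y s \<longleftrightarrow> y = a') \<or> (\<forall>y\<in>D. E y s \<longleftrightarrow> (y = a' \<or> y = b'))"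
    using is_pairD[OF assms(7) s(1)] by blast
  then have a': "a' = a" using s assms by metis
  have "E d q" using is_pairD[OF assms(6) d(1)] d by blast
  then have "(\<forall>y\<in>D. E y d \<longleftrightarrow> y = a') \<or> (\<forall>y\<in>D. E y d \<longleftrightarrow> (y = a' \<or> y = b'))"
    using is_pairD[OF assms(7) d(1)] by blast
  then have b: "b = a \<or> b = b'" using d a' assms by metis
  have "E d' q" using is_pairD[OF assms(7) d'(1)] d' by blast
  then have "(\<forall>y\<in>D. E y d' \<longleftrightarrow> y = a) \<or> (\<forall>y\<in>D. E y d' \<longleftrightarrow> (y = a \<or> y = b))"
    using is_pairD[OF assms(6) d'(1)] by blast
  then have "b' = a \<or> b' = b" using d' a' assms by metis
  then show ?thesis using a' b by auto
qed

end

section \<open>Transitive closures and kernels\<close>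

definition transitive_fm :: "nat \<Rightarrow> nat \<Rightarrow> nat \<Rightarrow> fm" where
  "transitive_fm t a b =
     Conj (Neg (Urel t)) (All a (Imp (Conj (Mem a t) (Neg (Urel a))) (All b (Imp (Mem b a) (Mem b t)))))"

lemma sat_transitive_fm [simp]: "a \<noteq> t \<Longrightarrow> b \<noteq> t \<Longrightarrow> b \<noteq> a \<Longrightarrow>
    sat D E Ur e (transitive_fm t a b) = is_transitive D E Ur (e t)"
  unfolding transitive_fm_def is_transitive_def by (simp add: imp_conjL)

definition tc_singleton_fm :: "nat \<Rightarrow> nat \<Rightarrow> nat \<Rightarrow> nat \<Rightarrow> nat \<Rightarrow> fm" where
  "tc_singleton_fm x t a b c = Conj (transitive_fm t a b) (Conj (Mem x t)
     (All a (Imp (Conj (transitive_fm a b c) (Mem x a)) (All b (Imp (Mem b t) (Mem b a))))))"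

lemma sat_tc_singleton_fm [simp]:
  assumes "distinct [x, t, a, b, c]"
  shows "sat D E Ur e (tc_singleton_fm x t a b c) = is_TC_singleton D E Ur (e x) (e t)"
proof -
  have "sat D E Ur e (transitive_fm t a b) = is_transitive D E Ur (e t)"
    and "\<And>d. sat D E Ur (e(a := d)) (transitive_fm a b c) = is_transitive D E Ur d"
    by (subst sat_transitive_fm; use assms in auto)+
  then show ?thesis
    using assms unfolding tc_singleton_fm_def is_TC_singleton_def by (simp add: imp_conjL)
qed

lemma sat_tc_singleton_fm_01 [simp]:
  "sat D E Ur (e(0 := u, 1 := v)) (tc_singleton_fm 0 1 2 3 4) = is_TC_singleton D E Ur u v"
  by (subst sat_tc_singleton_fm) auto

context zfcu_model
begin

abbreviation transitive :: "'a \<Rightarrow> bool" where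
  "transitive t \<equiv> is_transitive D E Ur t"

text \<open>Without Collection a set need not belong to any transitive set, so this is tracked
  explicitly; for sets that do, \<open>in_tc a z\<close> says that a lies in the transitive closure
  of {z}.\<close>

definition has_tc :: "'a \<Rightarrow> bool" where
  "has_tc z \<longleftrightarrow> (\<exists>t\<in>D. transitive t \<and> E z t)"

definition in_tc :: "'a \<Rightarrow> 'a \<Rightarrow> bool" where
  "in_tc a z \<longleftrightarrow> (\<forall>t\<in>D. transitive t \<longrightarrow> E z t \<longrightarrow> E a t)"

definition in_ker :: "'a \<Rightarrow> 'a \<Rightarrow> bool" where
  "in_ker z a \<longleftrightarrow> a \<in> D \<and> Ur a \<and> in_tc a z"

lemma transitiveD: "transitive t \<Longrightarrow> y \<in> D \<Longrightarrow> z \<in> D \<Longrightarrow> E y t \<Longrightarrow> E z y \<Longrightarrow> E z t"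
  using not_Ur_if_member unfolding is_transitive_def by blast

lemma transitive_not_Ur: "transitive t \<Longrightarrow> \<not> Ur t"
  unfolding is_transitive_def by blast

lemma transitive_if_TC_singleton: "is_TC_singleton D E Ur z t \<Longrightarrow> transitive t \<and> E z t"
  unfolding is_TC_singleton_def by blast

lemma in_tc_refl: "in_tc z z"
  unfolding in_tc_def by blast

lemma in_tc_member: "in_tc a z \<Longrightarrow> a \<in> D \<Longrightarrow> a' \<in> D \<Longrightarrow> E a' a \<Longrightarrow> in_tc a' z"
  unfolding in_tc_def using transitiveD by blast

lemma in_tc_member_member: "x \<in> D \<Longrightarrow> y \<in> D \<Longrightarrow> v \<in> D \<Longrightarrow> E y x \<Longrightarrow> E v y \<Longrightarrow> in_tc v x"
  using in_tc_member[OF in_tc_member[OF in_tc_refl]] by blast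

lemma in_kerD: "in_ker z a \<Longrightarrow> a \<in> D \<and> Ur a"
  unfolding in_ker_def by blast

lemma in_ker_member: "x \<in> D \<Longrightarrow> v \<in> D \<Longrightarrow> E v x \<Longrightarrow> in_ker v a \<Longrightarrow> in_ker x a"
  unfolding in_ker_def in_tc_def using transitiveD by blast

lemma in_ker_if_member: "s \<in> D \<Longrightarrow> a \<in> D \<Longrightarrow> Ur a \<Longrightarrow> E a s \<Longrightarrow> in_ker s a"
  unfolding in_ker_def in_tc_def using transitiveD by blast

lemma has_tc_member: "x \<in> D \<Longrightarrow> v \<in> D \<Longrightarrow> E v x \<Longrightarrow> has_tc x \<Longrightarrow> has_tc v"
  unfolding has_tc_def using transitiveD by blast

lemma in_ker_iff_TC_singleton:
  "t \<in> D \<Longrightarrow> is_TC_singleton D E Ur z t \<Longrightarrow> in_ker z a \<longleftrightarrow> (a \<in> D \<and> Ur a \<and> E a t)"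
  unfolding in_ker_def in_tc_def is_TC_singleton_def by blast

lemma TC_singleton_exists:
  assumes z: "z \<in> D" "has_tc z"
  shows "\<exists>t\<in>D. is_TC_singleton D E Ur z t"
proof -
  obtain t0 where t0: "t0 \<in> D" "transitive t0" "E z t0"
    using z unfolding has_tc_def by blast
  let ?\<phi> = "All 2 (Imp (Conj (transitive_fm 2 3 4) (Mem 1 2)) (Mem 0 2))"
  have "range (\<lambda>_. z) \<subseteq> D" using z by auto
  from separation[OF this t0(1) transitive_not_Ur[OF t0(2)], of ?\<phi>]
  obtain t where t: "t \<in> D" "\<not> Ur t"
    "\<forall>a\<in>D. E a t \<longleftrightarrow> (E a t0 \<and> sat D E Ur ((\<lambda>_. z)(0 := a)) ?\<phi>)"
    by blast
  have t_iff: "\<forall>a\<in>D. E a t \<longleftrightarrow> (E a t0 \<and> in_tc a z)"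
    using t(3) unfolding in_tc_def by (simp add: imp_conjL)
  have "transitive t"
    unfolding is_transitive_def
  proof (intro conjI ballI impI)
    show "\<not> Ur t" by fact
    fix y w assume y: "y \<in> D" "E y t" "\<not> Ur y" and w: "w \<in> D" "E w y"
    have "E y t0" "in_tc y z" using t_iff y by blast+
    then have "E w t0" "in_tc w z"
      using transitiveD[OF t0(2) y(1) w(1)] in_tc_member[OF _ y(1) w] w(2) by blast+
    then show "E w t" using t_iff w(1) by blast
  qed
  moreover have "E z t" using t_iff z(1) t0(3) in_tc_refl by blast
  moreover have "\<forall>t'\<in>D. transitive t' \<longrightarrow> E z t' \<longrightarrow> (\<forall>a\<in>D. E a t \<longrightarrow> E a t')"
    using t_iff unfolding in_tc_def by blast
  ultimately show ?thesis
    unfolding is_TC_singleton_def using t(1) by blast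
qed

lemma TC_singleton_unique:
  assumes "t \<in> D" "t' \<in> D" "is_TC_singleton D E Ur z t" "is_TC_singleton D E Ur z t'"
  shows "t = t'"
proof (rule extensionality)
  show "\<not> Ur t" "\<not> Ur t'"
    using assms(3,4) transitive_if_TC_singleton transitive_not_Ur by blast+
  show "E y t \<longleftrightarrow> E y t'" if "y \<in> D" for y
    using assms that unfolding is_TC_singleton_def by blast
qed (fact assms)+

lemma has_tc_in_ker_urelement: assumes "a \<in> D" "Ur a" shows "has_tc a" "in_ker a b \<Longrightarrow> b = a"
proof -
  obtain s where s: "s \<in> D" "\<not> Ur s" "\<forall>z\<in>D. E z s \<longleftrightarrow> z = a"
    using singleton[OF assms(1)] by blast
  have "transitive s"
    unfolding is_transitive_def
  proof (intro conjI ballI impI)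
    fix y w assume "y \<in> D" "E y s" "\<not> Ur y"
    then show "E w s" using s(3) assms(2) by auto
  qed (fact s(2))
  moreover have "E a s" using s(3) assms(1) by blast
  ultimately show "has_tc a"
    unfolding has_tc_def using s(1) by blast
  assume "in_ker a b"
  then have "b \<in> D" "E b s"
    unfolding in_ker_def in_tc_def using s(1) \<open>transitive s\<close> \<open>E a s\<close> by blast+
  then show "b = a" using s(3) by blast
qed

end

context zfcu_model
begin

lemma union_of_TC_singletons:
  assumes x: "x \<in> D" "\<not> Ur x" and members: "\<And>v. v \<in> D \<Longrightarrow> E v x \<Longrightarrow> has_tc v"
  shows "\<exists>U\<in>D. \<not> Ur U \<and> (\<forall>z\<in>D. E z U \<longleftrightarrow> (\<exists>u\<in>D. \<exists>t\<in>D. E u x \<and> is_TC_singleton D E Ur u t \<and> E z t))"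
proof -
  have r: "range (\<lambda>_. x) \<subseteq> D" using x by auto
  have "\<exists>t\<in>D. sat D E Ur ((\<lambda>_. x)(0 := u, 1 := t)) (tc_singleton_fm 0 1 2 3 4)
      \<and> (\<forall>t'\<in>D. sat D E Ur ((\<lambda>_. x)(0 := u, 1 := t')) (tc_singleton_fm 0 1 2 3 4) \<longrightarrow> t' = t)"
    if "u \<in> D" "E u x" for u
    using TC_singleton_exists[OF that(1) members[OF that]] TC_singleton_unique[of _ _ u]
    by (simp only: sat_tc_singleton_fm_01) blast
  from replacement[OF r x this] obtain R where R: "R \<in> D" "\<not> Ur R"
    "\<forall>t\<in>D. E t R \<longleftrightarrow> (\<exists>u\<in>D. E u x \<and> is_TC_singleton D E Ur u t)"
    by (simp only: sat_tc_singleton_fm_01) blast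
  obtain U where "U \<in> D" "\<not> Ur U" "\<forall>z\<in>D. E z U \<longleftrightarrow> (\<exists>t\<in>D. E t R \<and> E z t)"
    using union[OF R(1,2)] by blast
  then show ?thesis using R(3) by blast
qed

text \<open>TC({x}) is {x} together with the union of the TC({u}) for u in x.\<close>

lemma has_tc_set_ker_members:
  assumes x: "x \<in> D" "\<not> Ur x" and members: "\<And>v. v \<in> D \<Longrightarrow> E v x \<Longrightarrow> has_tc v"
  shows "has_tc x" and "in_ker x a \<Longrightarrow> \<exists>u\<in>D. E u x \<and> in_ker u a"
proof -
  obtain U where U: "U \<in> D" "\<not> Ur U"
    "\<forall>z\<in>D. E z U \<longleftrightarrow> (\<exists>u\<in>D. \<exists>t\<in>D. E u x \<and> is_TC_singleton D E Ur u t \<and> E z t)"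
    using union_of_TC_singletons[OF x members] by blast
  obtain S where S: "S \<in> D" "\<not> Ur S" "\<forall>z\<in>D. E z S \<longleftrightarrow> z = x"
    using singleton[OF x(1)] by blast
  obtain T where T: "T \<in> D" "\<not> Ur T" "\<forall>z\<in>D. E z T \<longleftrightarrow> (E z U \<or> E z S)"
    using binary_union[OF U(1) S(1) U(2) S(2)] by blast
  have T_iff: "E z T \<longleftrightarrow> z = x \<or> (\<exists>u\<in>D. \<exists>t\<in>D. E u x \<and> is_TC_singleton D E Ur u t \<and> E z t)"
    if "z \<in> D" for z
    using T(3) S(3) U(3) that by blast
  have "transitive T"
    unfolding is_transitive_def
  proof (intro conjI ballI impI)
    fix y w assume y: "y \<in> D" "E y T" "\<not> Ur y" and w: "w \<in> D" "E w y"
    consider "y = x" | u t where "u \<in> D" "t \<in> D" "E u x" "is_TC_singleton D E Ur u t" "E y t"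
      using T_iff[OF y(1)] y(2) by blast
    then show "E w T"
    proof cases
      case 1
      have "E w x" using w(2) 1 by simp
      then obtain t where t: "t \<in> D" "is_TC_singleton D E Ur w t"
        using TC_singleton_exists[OF w(1) members[OF w(1)]] by blast
      then show ?thesis
        using T_iff[OF w(1)] w(1) \<open>E w x\<close> transitive_if_TC_singleton[OF t(2)] by blast
    next
      case 2
      then have "E w t" using transitiveD[OF _ y(1) w(1)] w(2) transitive_if_TC_singleton by blast
      then show ?thesis using T_iff[OF w(1)] 2 by blast
    qed
  qed (fact T(2))
  moreover have "E x T" using T_iff[OF x(1)] by blast
  ultimately show "has_tc x" unfolding has_tc_def using T(1) by blast
  assume a: "in_ker x a"
  then have "a \<in> D" "E a T" "a \<noteq> x"
    using \<open>transitive T\<close> \<open>E x T\<close> T(1) x(2) unfolding in_ker_def in_tc_def by blast+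
  then obtain u t where "u \<in> D" "t \<in> D" "E u x" "is_TC_singleton D E Ur u t" "E a t"
    using T_iff by blast
  then show "\<exists>u\<in>D. E u x \<and> in_ker u a"
    using in_ker_iff_TC_singleton in_kerD[OF a] by blast
qed

end

section \<open>The class U^I\<close>

locale ideal_model = zfcu_model +
  fixes \<psi> :: fm and p :: "nat \<Rightarrow> 'a"
  assumes params: "range p \<subseteq> D"
    and ideal: "is_A_ideal D E Ur (\<lambda>k. sat D E Ur (p(0 := k)) \<psi>)"
begin

abbreviation in_I :: "'a \<Rightarrow> bool" where
  "in_I k \<equiv> sat D E Ur (p(0 := k)) \<psi>"

abbreviation UI :: "'a set" where
  "UI \<equiv> U_I D E Ur in_I"

lemma I_nonempty: "\<exists>k\<in>D. in_I k"
  using ideal unfolding is_A_ideal_def by blast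

lemma I_not_Ur: "k \<in> D \<Longrightarrow> in_I k \<Longrightarrow> \<not> Ur k"
  using ideal unfolding is_A_ideal_def by blast

lemma I_members_Ur: "k \<in> D \<Longrightarrow> in_I k \<Longrightarrow> y \<in> D \<Longrightarrow> E y k \<Longrightarrow> Ur y"
proof -
  have "\<forall>k\<in>D. in_I k \<longrightarrow> \<not> Ur k \<and> (\<forall>y\<in>D. E y k \<longrightarrow> Ur y)"
    using ideal unfolding is_A_ideal_def by (elim conjE)
  then show "k \<in> D \<Longrightarrow> in_I k \<Longrightarrow> y \<in> D \<Longrightarrow> E y k \<Longrightarrow> Ur y" by blast
qed

lemma I_not_all_Ur: "s \<in> D \<Longrightarrow> \<not> Ur s \<Longrightarrow> (\<forall>a\<in>D. E a s \<longleftrightarrow> Ur a) \<Longrightarrow> \<not> in_I s"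
  using ideal unfolding is_A_ideal_def by blast

lemma I_union: "x \<in> D \<Longrightarrow> y \<in> D \<Longrightarrow> u \<in> D \<Longrightarrow> in_I x \<Longrightarrow> in_I y \<Longrightarrow> \<not> Ur u \<Longrightarrow>
    (\<forall>z\<in>D. E z u \<longleftrightarrow> (E z x \<or> E z y)) \<Longrightarrow> in_I u"
  using ideal unfolding is_A_ideal_def by blast

lemma I_subset: "x \<in> D \<Longrightarrow> y \<in> D \<Longrightarrow> in_I x \<Longrightarrow> \<not> Ur y \<Longrightarrow> (\<forall>z\<in>D. E z y \<longrightarrow> E z x) \<Longrightarrow> in_I y"
  using ideal unfolding is_A_ideal_def by blast

lemma I_singleton: "a \<in> D \<Longrightarrow> s \<in> D \<Longrightarrow> Ur a \<Longrightarrow> \<not> Ur s \<Longrightarrow> (\<forall>z\<in>D. E z s \<longleftrightarrow> z = a) \<Longrightarrow> in_I s"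
  using ideal unfolding is_A_ideal_def by blast

definition small :: "('a \<Rightarrow> bool) \<Rightarrow> bool" where
  "small P \<longleftrightarrow> (\<exists>K\<in>D. in_I K \<and> (\<forall>a\<in>D. P a \<longrightarrow> E a K))"

lemma small_mono: "small P \<Longrightarrow> (\<And>a. a \<in> D \<Longrightarrow> Q a \<Longrightarrow> P a) \<Longrightarrow> small Q"
  unfolding small_def by blast

lemma small_empty: "small (\<lambda>a. False)"
  using I_nonempty unfolding small_def by blast

lemma small_union: assumes "small P" "small Q" shows "small (\<lambda>a. P a \<or> Q a)"
proof -
  obtain K1 where K1: "K1 \<in> D" "in_I K1" "\<forall>a\<in>D. P a \<longrightarrow> E a K1"
    using assms(1) unfolding small_def by blast
  obtain K2 where K2: "K2 \<in> D" "in_I K2" "\<forall>a\<in>D. Q a \<longrightarrow> E a K2"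
    using assms(2) unfolding small_def by blast
  obtain u where u: "u \<in> D" "\<not> Ur u" "\<forall>z\<in>D. E z u \<longleftrightarrow> (E z K1 \<or> E z K2)"
    using binary_union[OF K1(1) K2(1) I_not_Ur[OF K1(1,2)] I_not_Ur[OF K2(1,2)]] by blast
  have "in_I u" using I_union[OF K1(1) K2(1) u(1) K1(2) K2(2) u(2,3)] .
  then show ?thesis unfolding small_def using u K1 K2 by blast
qed

lemma small_singleton: assumes "c \<in> D" "Ur c" shows "small (\<lambda>a. a = c)"
proof -
  obtain s where s: "s \<in> D" "\<not> Ur s" "\<forall>z\<in>D. E z s \<longleftrightarrow> z = c"
    using singleton[OF assms(1)] by blast
  have "in_I s" using I_singleton[OF assms(1) s(1) assms(2) s(2,3)] .
  then show ?thesis unfolding small_def using s assms by blast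
qed

lemma small_not_all_Ur: assumes "small P" shows "\<exists>a\<in>D. Ur a \<and> \<not> P a"
proof (rule ccontr)
  assume all: "\<not> (\<exists>a\<in>D. Ur a \<and> \<not> P a)"
  obtain K where K: "K \<in> D" "in_I K" "\<forall>a\<in>D. P a \<longrightarrow> E a K"
    using assms unfolding small_def by blast
  have "\<forall>a\<in>D. E a K \<longleftrightarrow> Ur a"
    using K all I_members_Ur[OF K(1,2)] by blast
  then show False using I_not_all_Ur[OF K(1) I_not_Ur[OF K(1,2)]] K(2) by blast
qed

lemma UI_iff: "z \<in> UI \<longleftrightarrow> z \<in> D \<and> has_tc z \<and> small (in_ker z)"
proof
  assume "z \<in> UI"
  then obtain k where k: "z \<in> D" "k \<in> D" "is_ker D E Ur z k" "in_I k"
    unfolding U_I_def by blast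
  then obtain t where t: "t \<in> D" "is_TC_singleton D E Ur z t" "\<forall>a\<in>D. E a k \<longleftrightarrow> (E a t \<and> Ur a)"
    unfolding is_ker_def by blast
  have "has_tc z" using t transitive_if_TC_singleton unfolding has_tc_def by blast
  moreover have "small (in_ker z)"
    unfolding small_def using k t in_ker_iff_TC_singleton[OF t(1,2)] by blast
  ultimately show "z \<in> D \<and> has_tc z \<and> small (in_ker z)" using k by blast
next
  assume z: "z \<in> D \<and> has_tc z \<and> small (in_ker z)"
  obtain t where t: "t \<in> D" "is_TC_singleton D E Ur z t"
    using TC_singleton_exists[of z] z by blast
  obtain K where K: "K \<in> D" "in_I K" "\<forall>a\<in>D. in_ker z a \<longrightarrow> E a K"
    using z unfolding small_def by blast
  have r: "range (\<lambda>_. z) \<subseteq> D" using z by auto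
  obtain k where k: "k \<in> D" "\<not> Ur k" "\<forall>a\<in>D. E a k \<longleftrightarrow> (E a t \<and> sat D E Ur ((\<lambda>_. z)(0 := a)) (Urel 0))"
    using separation[OF r t(1) transitive_not_Ur, of "Urel 0"] transitive_if_TC_singleton[OF t(2)] by blast
  have k': "\<forall>a\<in>D. E a k \<longleftrightarrow> (E a t \<and> Ur a)" using k(3) by simp
  have "is_ker D E Ur z k" unfolding is_ker_def using k(2) k' t by blast
  moreover have "in_I k"
    using I_subset[OF K(1) k(1) K(2) k(2)] k' K in_ker_iff_TC_singleton[OF t(1,2)] by blast
  ultimately show "z \<in> UI" unfolding U_I_def using z k(1) by blast
qed

lemma UI_D: "z \<in> UI \<Longrightarrow> z \<in> D"
  unfolding U_I_def by blast

lemma UI_has_tc: "z \<in> UI \<Longrightarrow> has_tc z"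
  using UI_iff by blast

lemma UI_small: "z \<in> UI \<Longrightarrow> small (in_ker z)"
  using UI_iff by blast

lemma UI_member: assumes "x \<in> UI" "v \<in> D" "E v x" shows "v \<in> UI"
proof -
  have x: "x \<in> D" "has_tc x" "small (in_ker x)" using assms(1) UI_iff by blast+
  have "has_tc v" using has_tc_member[OF x(1) assms(2,3) x(2)] .
  moreover have "small (in_ker v)" using small_mono[OF x(3)] in_ker_member[OF x(1) assms(2,3)] by blast
  ultimately show ?thesis using UI_iff assms(2) by blast
qed

lemma urelement_in_UI: assumes "a \<in> D" "Ur a" shows "a \<in> UI"
proof -
  have "small (in_ker a)"
    using small_mono[OF small_singleton[OF assms]] has_tc_in_ker_urelement(2)[OF assms] by blast
  then show ?thesis using UI_iff has_tc_in_ker_urelement(1)[OF assms] assms(1) by blast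
qed

lemma set_in_UI_ker_bound:
  assumes x: "x \<in> D" "\<not> Ur x"
    and members: "\<And>v. v \<in> D \<Longrightarrow> E v x \<Longrightarrow> v \<in> UI \<and> (\<forall>a. in_ker v a \<longrightarrow> P a)"
    and "small P"
  shows "x \<in> UI \<and> (\<forall>a. in_ker x a \<longrightarrow> P a)"
proof -
  have "\<And>v. v \<in> D \<Longrightarrow> E v x \<Longrightarrow> has_tc v" using members UI_has_tc by blast
  note x_tc = has_tc_set_ker_members[OF x this]
  have "\<forall>a. in_ker x a \<longrightarrow> P a" using x_tc(2) members by blast
  moreover then have "small (in_ker x)" using small_mono[OF \<open>small P\<close>] by blast
  ultimately show ?thesis using UI_iff x(1) x_tc(1) by blast
qed

lemma set_in_UI:
  "x \<in> D \<Longrightarrow> \<not> Ur x \<Longrightarrow> (\<And>v. v \<in> D \<Longrightarrow> E v x \<Longrightarrow> v \<in> UI \<and> (\<forall>a. in_ker v a \<longrightarrow> P a)) \<Longrightarrow>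
    small P \<Longrightarrow> x \<in> UI"
  using set_in_UI_ker_bound by blast

end

section \<open>Pairing, union, power set, infinity and choice in U^I\<close>

context ideal_model
begin

lemma UI_if_in_tc:
  assumes "x \<in> UI" "v \<in> D" "in_tc v x"
  shows "v \<in> UI \<and> (\<forall>a. in_ker v a \<longrightarrow> in_ker x a)"
proof -
  have ker: "\<forall>a. in_ker v a \<longrightarrow> in_ker x a"
    using assms(3) unfolding in_ker_def in_tc_def by blast
  have "has_tc v"
    using UI_has_tc[OF assms(1)] assms(3) unfolding has_tc_def in_tc_def by blast
  then show ?thesis
    using UI_iff small_mono[OF UI_small[OF assms(1)]] ker assms(2) by blast
qed

lemma set_in_UI_below:
  assumes "x \<in> UI" "y \<in> D" "\<not> Ur y" and "\<And>v. v \<in> D \<Longrightarrow> E v y \<Longrightarrow> in_tc v x"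
  shows "y \<in> UI \<and> (\<forall>a. in_ker y a \<longrightarrow> in_ker x a)"
  using set_in_UI_ker_bound[OF assms(2,3) _ UI_small[OF assms(1)]] UI_if_in_tc[OF assms(1)] assms(4)
  by blast

lemma UI_nonempty: "UI \<noteq> {}"
proof -
  obtain e where e: "e \<in> D" "\<not> Ur e" "\<forall>z\<in>D. \<not> E z e"
    using infinity unfolding ax_infinity_def by blast
  have "e \<in> UI" using set_in_UI[OF e(1,2) _ small_empty] e(3) by blast
  then show ?thesis by blast
qed

lemma UI_urelements: "ax_urelements UI E Ur"
  unfolding ax_urelements_def using urelement_no_members UI_D by blast

lemma UI_extensionality: "ax_extensionality UI E Ur"
  unfolding ax_extensionality_def
proof (intro ballI impI)
  fix x y assume xy: "x \<in> UI" "y \<in> UI" "\<not> Ur x" "\<not> Ur y" and same: "\<forall>z\<in>UI. E z x \<longleftrightarrow> E z y"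
  show "x = y"
  proof (rule extensionality[OF UI_D[OF xy(1)] UI_D[OF xy(2)] xy(3,4)])
    fix z assume "z \<in> D"
    then show "E z x \<longleftrightarrow> E z y"
      using same UI_member[OF xy(1)] UI_member[OF xy(2)] by blast
  qed
qed

lemma UI_foundation: "ax_foundation UI E Ur"
  unfolding ax_foundation_def
proof (intro ballI impI)
  fix x assume x: "x \<in> UI" and "\<exists>y\<in>UI. E y x"
  then obtain y0 where y0: "y0 \<in> UI" "E y0 x" by blast
  obtain y where y: "y \<in> D" "E y x" "\<not> (\<exists>z\<in>D. E z y \<and> E z x)"
    using foundation[OF UI_D[OF x] UI_D[OF y0(1)] y0(2)] by blast
  have "y \<in> UI" using UI_member[OF x y(1,2)] .
  then show "\<exists>y\<in>UI. E y x \<and> \<not> (\<exists>z\<in>UI. E z y \<and> E z x)" using y UI_D by blast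
qed

lemma UI_pairing: "ax_pairing UI E Ur"
  unfolding ax_pairing_def
proof (intro ballI)
  fix x y assume xy: "x \<in> UI" "y \<in> UI"
  obtain p where p: "p \<in> D" "\<not> Ur p" "\<forall>z\<in>D. E z p \<longleftrightarrow> (z = x \<or> z = y)"
    using pairing[OF UI_D[OF xy(1)] UI_D[OF xy(2)]] by blast
  have "p \<in> UI"
  proof (rule set_in_UI[OF p(1,2) _ small_union[OF UI_small[OF xy(1)] UI_small[OF xy(2)]]])
    fix v assume "v \<in> D" "E v p"
    then have "v = x \<or> v = y" using p(3) by blast
    then show "v \<in> UI \<and> (\<forall>a. in_ker v a \<longrightarrow> in_ker x a \<or> in_ker y a)" using xy by blast
  qed
  then show "\<exists>p\<in>UI. \<not> Ur p \<and> (\<forall>z\<in>UI. E z p \<longleftrightarrow> (z = x \<or> z = y))" using p UI_D by blast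
qed

lemma UI_union: "ax_union UI E Ur"
  unfolding ax_union_def
proof (intro ballI impI)
  fix x assume x: "x \<in> UI" "\<not> Ur x"
  obtain u where u: "u \<in> D" "\<not> Ur u" "\<forall>z\<in>D. E z u \<longleftrightarrow> (\<exists>y\<in>D. E y x \<and> E z y)"
    using union[OF UI_D[OF x(1)] x(2)] by blast
  have "u \<in> UI"
    using set_in_UI_below[OF x(1) u(1,2)] u(3) in_tc_member_member[OF UI_D[OF x(1)]] by blast
  moreover have "\<forall>z\<in>UI. E z u \<longleftrightarrow> (\<exists>y\<in>UI. E y x \<and> E z y)"
    using u(3) UI_D UI_member[OF x(1)] by blast
  ultimately show "\<exists>u\<in>UI. \<not> Ur u \<and> (\<forall>z\<in>UI. E z u \<longleftrightarrow> (\<exists>y\<in>UI. E y x \<and> E z y))"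
    using u(2) by blast
qed

lemma UI_powerset: "ax_powerset UI E Ur"
  unfolding ax_powerset_def
proof (intro ballI impI)
  fix x assume x: "x \<in> UI" "\<not> Ur x"
  have xD: "x \<in> D" using UI_D[OF x(1)] .
  obtain p where p: "p \<in> D" "\<not> Ur p" "\<forall>y\<in>D. E y p \<longleftrightarrow> (\<not> Ur y \<and> (\<forall>z\<in>D. E z y \<longrightarrow> E z x))"
    using powerset[OF xD x(2)] by blast
  have subsets: "y \<in> UI \<and> (\<forall>a. in_ker y a \<longrightarrow> in_ker x a)" if "y \<in> D" "E y p" for y
    using set_in_UI_below[OF x(1) that(1)] p(3) that in_tc_member[OF in_tc_refl xD] by blast
  have "p \<in> UI"
    using set_in_UI[OF p(1,2) subsets UI_small[OF x(1)]] .
  moreover have "\<forall>y\<in>UI. E y p \<longleftrightarrow> (\<not> Ur y \<and> (\<forall>z\<in>UI. E z y \<longrightarrow> E z x))"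
    using p(3) UI_D UI_member by blast
  ultimately show "\<exists>p\<in>UI. \<not> Ur p \<and> (\<forall>y\<in>UI. E y p \<longleftrightarrow> (\<not> Ur y \<and> (\<forall>z\<in>UI. E z y \<longrightarrow> E z x)))"
    using p(2) by blast
qed

lemma UI_A_proper_class: "A_proper_class UI E Ur"
  unfolding A_proper_class_def
proof
  assume "\<exists>s\<in>UI. \<not> Ur s \<and> (\<forall>a\<in>UI. E a s \<longleftrightarrow> Ur a)"
  then obtain s where s: "s \<in> UI" "\<forall>a\<in>UI. E a s \<longleftrightarrow> Ur a" by blast
  obtain a where a: "a \<in> D" "Ur a" "\<not> in_ker s a"
    using small_not_all_Ur[OF UI_small[OF s(1)]] by blast
  have "E a s" using s(2) urelement_in_UI[OF a(1,2)] a(2) by blast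
  then show False using in_ker_if_member[OF UI_D[OF s(1)] a(1,2)] a(3) by blast
qed

end

context ideal_model
begin

definition pure :: "'a \<Rightarrow> bool" where
  "pure n \<longleftrightarrow> (\<exists>t\<in>D. transitive t \<and> E n t \<and> (\<forall>a\<in>D. E a t \<longrightarrow> \<not> Ur a))"

lemma pure_in_UI: assumes "n \<in> D" "pure n" shows "n \<in> UI" "\<not> in_ker n a"
proof -
  obtain t where t: "t \<in> D" "transitive t" "E n t" "\<forall>a\<in>D. E a t \<longrightarrow> \<not> Ur a"
    using assms(2) unfolding pure_def by blast
  have no_ker: "\<not> in_ker n a" for a using t unfolding in_ker_def in_tc_def by blast
  have "has_tc n" using t unfolding has_tc_def by blast
  then show "n \<in> UI" using UI_iff assms(1) small_mono[OF small_empty] no_ker by blast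
  show "\<not> in_ker n a" by (fact no_ker)
qed

lemma pure_empty: assumes "e \<in> D" "\<not> Ur e" "\<forall>z\<in>D. \<not> E z e" shows "pure e"
proof -
  obtain s where s: "s \<in> D" "\<not> Ur s" "\<forall>z\<in>D. E z s \<longleftrightarrow> z = e"
    using singleton[OF assms(1)] by blast
  have "transitive s"
    unfolding is_transitive_def
  proof (intro conjI ballI impI)
    fix y z assume "y \<in> D" "E y s" "z \<in> D" "E z y"
    moreover from this have "y = e" using s(3) by blast
    ultimately show "E z s" using assms(3) by blast
  qed (fact s(2))
  moreover have "\<forall>a\<in>D. E a s \<longrightarrow> \<not> Ur a"
  proof (intro ballI impI)
    fix a assume "a \<in> D" "E a s"
    then have "a = e" using s(3) by blast
    then show "\<not> Ur a" using assms(2) by simp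
  qed
  moreover have "E e s" using s(3) assms(1) by blast
  ultimately show ?thesis unfolding pure_def using s(1) by blast
qed

lemma pure_successor:
  assumes y: "y \<in> D" "pure y" and s: "s \<in> D" "\<not> Ur s" "\<forall>z\<in>D. E z s \<longleftrightarrow> (E z y \<or> z = y)"
  shows "pure s"
proof -
  obtain t where t: "t \<in> D" "transitive t" "E y t" "\<forall>a\<in>D. E a t \<longrightarrow> \<not> Ur a"
    using y(2) unfolding pure_def by blast
  obtain ss where ss: "ss \<in> D" "\<not> Ur ss" "\<forall>z\<in>D. E z ss \<longleftrightarrow> z = s"
    using singleton[OF s(1)] by blast
  obtain T where T: "T \<in> D" "\<not> Ur T" "\<forall>z\<in>D. E z T \<longleftrightarrow> (E z t \<or> E z ss)"
    using binary_union[OF t(1) ss(1) transitive_not_Ur[OF t(2)] ss(2)] by blast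
  have T_iff: "E z T \<longleftrightarrow> (E z t \<or> z = s)" if "z \<in> D" for z
    using T(3) ss(3) that by blast
  have "transitive T"
    unfolding is_transitive_def
  proof (intro conjI ballI impI)
    fix a b assume a: "a \<in> D" "E a T" and b: "b \<in> D" "E b a"
    have "E b t"
    proof (cases "a = s")
      case True
      then have "E b y \<or> b = y" using s(3) b by blast
      then show ?thesis using transitiveD[OF t(2) y(1) b(1) t(3)] t(3) by blast
    next
      case False
      then have "E a t" using T_iff[OF a(1)] a(2) by blast
      then show ?thesis using transitiveD[OF t(2) a(1) b(1)] b(2) by blast
    qed
    then show "E b T" using T_iff[OF b(1)] by blast
  qed (fact T(2))
  moreover have "\<forall>a\<in>D. E a T \<longrightarrow> \<not> Ur a" using T_iff t(4) s(2) by blast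
  ultimately show ?thesis unfolding pure_def using T(1) T_iff[OF s(1)] by blast
qed

text \<open>The infinite set of the universe may contain urelements hereditarily; its pure part,
  cut out by Separation, is an inductive set of U^I.\<close>

lemma UI_infinity: "ax_infinity UI E Ur"
proof -
  obtain w e where w: "w \<in> D" "\<not> Ur w" and e: "e \<in> D" "\<not> Ur e" "\<forall>z\<in>D. \<not> E z e" "E e w"
    and succ: "\<forall>y\<in>D. E y w \<longrightarrow> (\<exists>s\<in>D. \<not> Ur s \<and> E s w \<and> (\<forall>z\<in>D. E z s \<longleftrightarrow> (E z y \<or> z = y)))"
    using infinity unfolding ax_infinity_def by blast
  let ?\<phi> = "Ex 1 (Conj (transitive_fm 1 2 3) (Conj (Mem 0 1) (All 2 (Imp (Mem 2 1) (Neg (Urel 2))))))"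
  have r: "range (\<lambda>_. w) \<subseteq> D" using w by auto
  obtain w' where w': "w' \<in> D" "\<not> Ur w'" "\<forall>z\<in>D. E z w' \<longleftrightarrow> (E z w \<and> sat D E Ur ((\<lambda>_. w)(0 := z)) ?\<phi>)"
    using separation[OF r w(1,2), of ?\<phi>] by blast
  have w'_iff: "\<forall>z\<in>D. E z w' \<longleftrightarrow> (E z w \<and> pure z)"
    using w'(3) unfolding pure_def by simp
  have "w' \<in> UI"
    using set_in_UI[OF w'(1,2) _ small_empty] w'_iff pure_in_UI by blast
  moreover have "E e w'" using w'_iff e(1,4) pure_empty[OF e(1-3)] by blast
  moreover have "e \<in> UI" using pure_in_UI(1)[OF e(1) pure_empty[OF e(1-3)]] .
  moreover have "\<forall>z\<in>UI. \<not> E z e" using e(3) UI_D by blast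
  moreover have "\<exists>s\<in>UI. \<not> Ur s \<and> E s w' \<and> (\<forall>z\<in>UI. E z s \<longleftrightarrow> (E z y \<or> z = y))"
    if y: "y \<in> UI" "E y w'" for y
  proof -
    have yD: "y \<in> D" using UI_D[OF y(1)] .
    obtain s where s: "s \<in> D" "\<not> Ur s" "E s w" "\<forall>z\<in>D. E z s \<longleftrightarrow> (E z y \<or> z = y)"
      using succ w'_iff yD y(2) by blast
    have "pure s" using pure_successor[OF yD _ s(1,2,4)] w'_iff yD y(2) by blast
    then show ?thesis using pure_in_UI(1)[OF s(1)] w'_iff s UI_D by blast
  qed
  ultimately show ?thesis
    unfolding ax_infinity_def using w'(2) e(2) by blast
qed

text \<open>A choice set in the universe may contain junk outside the union of x, which need not lie
  in U^I; its trace on that union does.\<close>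

lemma trace_on_union_in_UI:
  assumes x: "x \<in> UI" and c: "c \<in> D" "\<not> Ur c"
  shows "\<exists>c'\<in>UI. \<not> Ur c' \<and> (\<forall>z\<in>D. E z c' \<longleftrightarrow> (E z c \<and> (\<exists>y\<in>D. E y x \<and> E z y)))"
proof -
  let ?\<phi> = "Ex 2 (Conj (Mem 2 1) (Mem 0 2))"
  have "range (\<lambda>_. x) \<subseteq> D" using UI_D[OF x] by auto
  from separation[OF this c, of ?\<phi>]
  obtain c' where c': "c' \<in> D" "\<not> Ur c'" "\<forall>z\<in>D. E z c' \<longleftrightarrow> (E z c \<and> (\<exists>y\<in>D. E y x \<and> E z y))"
    by auto
  then have "c' \<in> UI"
    using set_in_UI_below[OF x c'(1,2)] in_tc_member_member[OF UI_D[OF x]] by blast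
  then show ?thesis using c' by blast
qed

lemma UI_choice: "ax_choice UI E Ur"
  unfolding ax_choice_def
proof (intro ballI impI)
  fix x assume x: "x \<in> UI" "\<not> Ur x"
    and nonempty: "\<forall>y\<in>UI. E y x \<longrightarrow> \<not> Ur y \<and> (\<exists>z\<in>UI. E z y)"
    and disjoint: "\<forall>y1\<in>UI. \<forall>y2\<in>UI. E y1 x \<longrightarrow> E y2 x \<longrightarrow> y1 \<noteq> y2 \<longrightarrow> \<not> (\<exists>z\<in>UI. E z y1 \<and> E z y2)"
  have xD: "x \<in> D" using UI_D[OF x(1)] .
  have "\<forall>y\<in>D. E y x \<longrightarrow> \<not> Ur y \<and> (\<exists>z\<in>D. E z y)"
  proof (intro ballI impI)
    fix y assume y: "y \<in> D" "E y x"
    then have "y \<in> UI" using UI_member[OF x(1)] by blast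
    then show "\<not> Ur y \<and> (\<exists>z\<in>D. E z y)" using nonempty y UI_D by blast
  qed
  moreover have "\<forall>y1\<in>D. \<forall>y2\<in>D. E y1 x \<longrightarrow> E y2 x \<longrightarrow> y1 \<noteq> y2 \<longrightarrow> \<not> (\<exists>z\<in>D. E z y1 \<and> E z y2)"
  proof (intro ballI impI notI)
    fix y1 y2 assume y: "y1 \<in> D" "y2 \<in> D" "E y1 x" "E y2 x" "y1 \<noteq> y2" "\<exists>z\<in>D. E z y1 \<and> E z y2"
    then obtain z where z: "z \<in> D" "E z y1" "E z y2" by blast
    have u: "y1 \<in> UI" "y2 \<in> UI" using UI_member[OF x(1)] y by blast+
    then have "z \<in> UI" using UI_member z by blast
    then show False using disjoint u y z by blast
  qed
  ultimately obtain c where c: "c \<in> D" "\<not> Ur c"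
    "\<forall>y\<in>D. E y x \<longrightarrow> (\<exists>z\<in>D. E z c \<and> E z y \<and> (\<forall>z'\<in>D. E z' c \<longrightarrow> E z' y \<longrightarrow> z' = z))"
    using choice[unfolded ax_choice_def, rule_format, OF xD x(2)] by blast
  obtain c' where c': "c' \<in> UI" "\<not> Ur c'" and c'_iff: "\<forall>z\<in>D. E z c' \<longleftrightarrow> (E z c \<and> (\<exists>y\<in>D. E y x \<and> E z y))"
    using trace_on_union_in_UI[OF x(1) c(1,2)] by blast
  have "\<forall>y\<in>UI. E y x \<longrightarrow>
      (\<exists>z\<in>UI. E z c' \<and> E z y \<and> (\<forall>z'\<in>UI. E z' c' \<longrightarrow> E z' y \<longrightarrow> z' = z))"
  proof (intro ballI impI)
    fix y assume y: "y \<in> UI" "E y x"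
    obtain z where z: "z \<in> D" "E z c" "E z y" "\<forall>z'\<in>D. E z' c \<longrightarrow> E z' y \<longrightarrow> z' = z"
      using c(3) UI_D[OF y(1)] y(2) by blast
    have "E z c'" using c'_iff z UI_D[OF y(1)] y(2) by blast
    moreover have "\<forall>z'\<in>UI. E z' c' \<longrightarrow> E z' y \<longrightarrow> z' = z" using c'_iff z(4) UI_D by blast
    ultimately show "\<exists>z\<in>UI. E z c' \<and> E z y \<and> (\<forall>z'\<in>UI. E z' c' \<longrightarrow> E z' y \<longrightarrow> z' = z)"
      using UI_member[OF y(1) z(1,3)] z(3) by blast
  qed
  then show "\<exists>c\<in>UI. \<not> Ur c \<and> (\<forall>y\<in>UI. E y x \<longrightarrow>
      (\<exists>z\<in>UI. E z c \<and> E z y \<and> (\<forall>z'\<in>UI. E z' c \<longrightarrow> E z' y \<longrightarrow> z' = z)))"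
    using c' by blast
qed

end

section \<open>Separation by relativisation\<close>

definition ker_fm :: "nat \<Rightarrow> nat \<Rightarrow> nat \<Rightarrow> fm" where
  "ker_fm k t a = All a (Iff (Mem a k) (Conj (Mem a t) (Urel a)))"

text \<open>In the relativisation of a formula, variable 3i stands for variable i of the original
  formula and 3i+1 for parameter i of the ideal's defining formula \<open>\<psi>\<close> (whose variable 0,
  at position 1, is bound to the candidate kernel); positions 3i+2 are scratch.\<close>

definition in_UI_fm :: "fm \<Rightarrow> nat \<Rightarrow> fm" where
  "in_UI_fm \<psi> j = Ex 1 (Ex 2 (Conj (tc_singleton_fm j 2 5 8 11)
     (Conj (ker_fm 1 2 5) (Conj (Neg (Urel 1)) (rename (\<lambda>i. 3 * i + 1) \<psi>)))))"

fun relativize :: "fm \<Rightarrow> fm \<Rightarrow> fm" where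
  "relativize \<psi> (Mem i j) = Mem (3 * i) (3 * j)"
| "relativize \<psi> (Equ i j) = Equ (3 * i) (3 * j)"
| "relativize \<psi> (Urel i) = Urel (3 * i)"
| "relativize \<psi> (Neg q) = Neg (relativize \<psi> q)"
| "relativize \<psi> (Conj q r) = Conj (relativize \<psi> q) (relativize \<psi> r)"
| "relativize \<psi> (Ex i q) = Ex (3 * i) (Conj (in_UI_fm \<psi> (3 * i)) (relativize \<psi> q))"

context ideal_model
begin

definition carries_params :: "(nat \<Rightarrow> 'a) \<Rightarrow> bool" where
  "carries_params e \<longleftrightarrow> (\<forall>i>0. e (3 * i + 1) = p i)"

lemma carries_params_upd: "carries_params e \<Longrightarrow> i mod 3 \<noteq> 1 \<or> i = 1 \<Longrightarrow> carries_params (e(i := d))"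
  unfolding carries_params_def by auto

lemma sat_in_UI_fm:
  assumes "carries_params e" "j mod 3 = 0" "e j \<in> D"
  shows "sat D E Ur e (in_UI_fm \<psi> j) \<longleftrightarrow> e j \<in> UI"
proof -
  have j: "j \<noteq> 1" "j \<noteq> 2" "j \<noteq> 5" "j \<noteq> 8" "j \<noteq> 11" using assms(2) by auto
  have "(e(Suc 0 := k, 2 := t)) \<circ> (\<lambda>i. Suc (3 * i)) = p(0 := k)" for k t
    using assms(1) unfolding carries_params_def by (auto simp: fun_eq_iff)
  then have \<psi>: "sat D E Ur (e(Suc 0 := k, 2 := t)) (rename (\<lambda>i. Suc (3 * i)) \<psi>) = in_I k" for k t
    by (simp add: sat_rename inj_def)
  have "sat D E Ur e (in_UI_fm \<psi> j) \<longleftrightarrow> (\<exists>k\<in>D. \<exists>t\<in>D. is_TC_singleton D E Ur (e j) t \<and>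
      (\<forall>a\<in>D. E a k \<longleftrightarrow> (E a t \<and> Ur a)) \<and> \<not> Ur k \<and> in_I k)"
    unfolding in_UI_fm_def ker_fm_def using j by (simp add: \<psi> sat_tc_singleton_fm)
  also have "\<dots> \<longleftrightarrow> e j \<in> UI"
    unfolding U_I_def is_ker_def using assms(3) by blast
  finally show ?thesis .
qed

lemma sat_relativize:
  "carries_params e \<Longrightarrow> (\<forall>i. e (3 * i) \<in> UI) \<Longrightarrow>
    sat D E Ur e (relativize \<psi> q) \<longleftrightarrow> sat UI E Ur (\<lambda>i. e (3 * i)) q"
proof (induction q arbitrary: e)
  case (Ex i q)
  have "sat D E Ur e (relativize \<psi> (Ex i q)) \<longleftrightarrow>
      (\<exists>d\<in>D. d \<in> UI \<and> sat D E Ur (e(3 * i := d)) (relativize \<psi> q))"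
    using sat_in_UI_fm[OF carries_params_upd[OF Ex.prems(1)]] by simp
  also have "\<dots> \<longleftrightarrow> (\<exists>d\<in>UI. sat UI E Ur ((\<lambda>i. e (3 * i))(i := d)) q)"
  proof -
    have "sat D E Ur (e(3 * i := d)) (relativize \<psi> q) \<longleftrightarrow> sat UI E Ur ((\<lambda>i. e (3 * i))(i := d)) q"
      if "d \<in> UI" for d
    proof -
      have "(\<lambda>i'. (e(3 * i := d)) (3 * i')) = (\<lambda>i. e (3 * i))(i := d)"
        by (auto simp: fun_eq_iff)
      moreover have "(e(3 * i := d)) (3 * i') \<in> UI" for i'
      proof (cases "i' = i")
        case False
        then have "(e(3 * i := d)) (3 * i') = e (3 * i')" by simp
        then show ?thesis using Ex.prems(2) by metis
      qed (use that in simp)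
      moreover have "carries_params (e(3 * i := d))"
        using carries_params_upd[OF Ex.prems(1)] by simp
      ultimately show ?thesis using Ex.IH by metis
    qed
    then show ?thesis using UI_D by blast
  qed
  finally show ?case by (simp only: sat.simps)
qed simp_all

definition lift_env :: "(nat \<Rightarrow> 'a) \<Rightarrow> nat \<Rightarrow> 'a" where
  "lift_env env n = (if n mod 3 = 0 then env (n div 3) else if n mod 3 = 1 then p (n div 3) else p 0)"

lemma lift_env_carries_params: "carries_params (lift_env env)"
proof -
  have "Suc (3 * i) div 3 = i" "Suc (3 * i) mod 3 = 1" for i :: nat by presburger+
  then show ?thesis unfolding carries_params_def lift_env_def by simp
qed

lemma range_lift_env: "range env \<subseteq> UI \<Longrightarrow> range (lift_env env) \<subseteq> D"
  unfolding lift_env_def using params UI_D by auto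

lemma lift_env_upd: "i mod 3 = 0 \<Longrightarrow> (lift_env env)(i := d) = lift_env (env(i div 3 := d))"
  unfolding lift_env_def by (auto simp: fun_eq_iff)

lemma sat_relativize_lift_env:
  "range env \<subseteq> UI \<Longrightarrow> sat D E Ur (lift_env env) (relativize \<psi> q) \<longleftrightarrow> sat UI E Ur env q"
  using sat_relativize[OF lift_env_carries_params, of env q] unfolding lift_env_def by auto

lemma UI_separation: "ax_separation UI E Ur"
  unfolding ax_separation_def
proof (intro allI impI ballI)
  fix \<phi> :: fm and env :: "nat \<Rightarrow> 'a" and x assume env: "range env \<subseteq> UI" and x: "x \<in> UI" "\<not> Ur x"
  obtain y where y: "y \<in> D" "\<not> Ur y"
    "\<forall>z\<in>D. E z y \<longleftrightarrow> (E z x \<and> sat D E Ur ((lift_env env)(0 := z)) (relativize \<psi> \<phi>))"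
    using separation[OF range_lift_env[OF env] UI_D[OF x(1)] x(2)] by blast
  have "y \<in> UI"
    using set_in_UI_below[OF x(1) y(1,2)] y(3) in_tc_member[OF in_tc_refl UI_D[OF x(1)]] by blast
  moreover have "sat D E Ur ((lift_env env)(0 := z)) (relativize \<psi> \<phi>) \<longleftrightarrow> sat UI E Ur (env(0 := z)) \<phi>"
    if "z \<in> UI" for z
    using sat_relativize_lift_env[OF range_fun_upd_subset[OF env that]] by (simp add: lift_env_upd)
  ultimately show "\<exists>y\<in>UI. \<not> Ur y \<and> (\<forall>z\<in>UI. E z y \<longleftrightarrow> (E z x \<and> sat UI E Ur (env(0 := z)) \<phi>))"
    using y UI_D by blast
qed

end

section \<open>Bisimulations realising the swap of two urelements\<close>

definition swap :: "'a \<Rightarrow> 'a \<Rightarrow> 'a \<Rightarrow> 'a" where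
  "swap c c' a = (if a = c then c' else if a = c' then c else a)"

lemma swap_swap [simp]: "swap c c' (swap c c' a) = a"
  unfolding swap_def by auto

definition singleton_fm :: "nat \<Rightarrow> nat \<Rightarrow> nat \<Rightarrow> fm" where
  "singleton_fm x a y = Conj (Neg (Urel x)) (All y (Iff (Mem y x) (Equ y a)))"

definition doubleton_fm :: "nat \<Rightarrow> nat \<Rightarrow> nat \<Rightarrow> nat \<Rightarrow> fm" where
  "doubleton_fm x a b y = Conj (Neg (Urel x)) (All y (Iff (Mem y x) (Or (Equ y a) (Equ y b))))"

definition pair_fm :: "nat \<Rightarrow> nat \<Rightarrow> nat \<Rightarrow> nat \<Rightarrow> nat \<Rightarrow> fm" where
  "pair_fm q a b x y =
     Conj (Neg (Urel q)) (All x (Iff (Mem x q) (Or (singleton_fm x a y) (doubleton_fm x a b y))))"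

definition in_rel_fm :: "nat \<Rightarrow> nat \<Rightarrow> nat \<Rightarrow> nat \<Rightarrow> nat \<Rightarrow> nat \<Rightarrow> fm" where
  "in_rel_fm r a b q x y = Ex q (Conj (Mem q r) (pair_fm q a b x y))"

definition swap_fm :: "nat \<Rightarrow> nat \<Rightarrow> nat \<Rightarrow> nat \<Rightarrow> fm" where
  "swap_fm a b c c' = Conj (Imp (Equ a c) (Equ b c'))
     (Conj (Imp (Conj (Neg (Equ a c)) (Equ a c')) (Equ b c))
       (Imp (Conj (Neg (Equ a c)) (Neg (Equ a c'))) (Equ b a)))"

definition back_and_forth_fm :: "nat \<Rightarrow> nat \<Rightarrow> nat \<Rightarrow> nat \<Rightarrow> nat \<Rightarrow> nat \<Rightarrow> nat \<Rightarrow> nat \<Rightarrow> fm" where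
  "back_and_forth_fm r a b a' b' q x y = Conj (Neg (Urel b)) (Conj
     (All a' (Imp (Mem a' a) (Ex b' (Conj (Mem b' b) (in_rel_fm r a' b' q x y)))))
     (All b' (Imp (Mem b' b) (Ex a' (Conj (Mem a' a) (in_rel_fm r a' b' q x y))))))"

definition swap_bisim_fm ::
  "nat \<Rightarrow> nat \<Rightarrow> nat \<Rightarrow> nat \<Rightarrow> nat \<Rightarrow> nat \<Rightarrow> nat \<Rightarrow> nat \<Rightarrow> nat \<Rightarrow> nat \<Rightarrow> nat \<Rightarrow> fm" where
  "swap_bisim_fm r c c' q a b a' b' q2 x y =
     Conj (Neg (Urel r)) (All q (Imp (Mem q r) (Ex a (Ex b (Conj (pair_fm q a b x y)
       (Conj (Imp (Urel a) (swap_fm a b c c')) (Imp (Neg (Urel a)) (back_and_forth_fm r a b a' b' q2 x y))))))))"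

definition in_tc_fm :: "nat \<Rightarrow> nat \<Rightarrow> nat \<Rightarrow> nat \<Rightarrow> nat \<Rightarrow> fm" where
  "in_tc_fm a s t u w = All t (Imp (Conj (transitive_fm t u w) (Mem s t)) (Mem a t))"

context zfcu_model
begin

definition in_rel :: "'a \<Rightarrow> 'a \<Rightarrow> 'a \<Rightarrow> bool" where
  "in_rel r a b \<longleftrightarrow> (\<exists>q\<in>D. E q r \<and> is_pair q a b)"

text \<open>On the sets it reaches, a swap bisimulation is the graph of the automorphism of the
  universe swapping the urelements c and c'.\<close>

definition swap_bisim_pair :: "'a \<Rightarrow> 'a \<Rightarrow> 'a \<Rightarrow> 'a \<Rightarrow> bool" where
  "swap_bisim_pair c c' r q \<longleftrightarrow> (\<exists>a\<in>D. \<exists>b\<in>D. is_pair q a b \<and>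
     (Ur a \<longrightarrow> b = swap c c' a) \<and>
     (\<not> Ur a \<longrightarrow> \<not> Ur b \<and> (\<forall>a'\<in>D. E a' a \<longrightarrow> (\<exists>b'\<in>D. E b' b \<and> in_rel r a' b'))
                       \<and> (\<forall>b'\<in>D. E b' b \<longrightarrow> (\<exists>a'\<in>D. E a' a \<and> in_rel r a' b'))))"

definition swap_bisim :: "'a \<Rightarrow> 'a \<Rightarrow> 'a \<Rightarrow> bool" where
  "swap_bisim c c' r \<longleftrightarrow> \<not> Ur r \<and> (\<forall>q\<in>D. E q r \<longrightarrow> swap_bisim_pair c c' r q)"

lemma in_rel_mono: "in_rel r a b \<Longrightarrow> (\<forall>q\<in>D. E q r \<longrightarrow> E q r') \<Longrightarrow> in_rel r' a b"
  unfolding in_rel_def by blast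

lemma swap_bisim_pair_mono:
  assumes "swap_bisim_pair c c' r q" and sub: "\<forall>q\<in>D. E q r \<longrightarrow> E q r'"
  shows "swap_bisim_pair c c' r' q"
proof -
  obtain a b where ab: "a \<in> D" "b \<in> D" "is_pair q a b" "Ur a \<longrightarrow> b = swap c c' a"
    and set: "\<not> Ur a \<longrightarrow> \<not> Ur b \<and> (\<forall>a'\<in>D. E a' a \<longrightarrow> (\<exists>b'\<in>D. E b' b \<and> in_rel r a' b'))
                       \<and> (\<forall>b'\<in>D. E b' b \<longrightarrow> (\<exists>a'\<in>D. E a' a \<and> in_rel r a' b'))"
    using assms(1) unfolding swap_bisim_pair_def by blast
  note mono = in_rel_mono[OF _ sub]
  from set have "\<not> Ur a \<longrightarrow> \<not> Ur b \<and> (\<forall>a'\<in>D. E a' a \<longrightarrow> (\<exists>b'\<in>D. E b' b \<and> in_rel r' a' b'))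
                       \<and> (\<forall>b'\<in>D. E b' b \<longrightarrow> (\<exists>a'\<in>D. E a' a \<and> in_rel r' a' b'))"
    by (blast intro: mono)
  then show ?thesis unfolding swap_bisim_pair_def using ab by blast
qed

lemma sat_pair_fm:
  "distinct [a, b, q, x, y] \<Longrightarrow> sat D E Ur e (pair_fm q a b x y) = is_pair (e q) (e a) (e b)"
  unfolding pair_fm_def singleton_fm_def doubleton_fm_def is_pair_def by auto

lemma sat_in_rel_fm:
  "distinct [r, a, b, q, x, y] \<Longrightarrow> sat D E Ur e (in_rel_fm r a b q x y) = in_rel (e r) (e a) (e b)"
  unfolding in_rel_fm_def in_rel_def by (simp add: sat_pair_fm)

lemma sat_swap_fm: "sat D E Ur e (swap_fm a b c c') = (e b = swap (e c) (e c') (e a))"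
  unfolding swap_fm_def swap_def by auto

lemma sat_swap_bisim_fm:
  assumes "distinct [r, c, c', q, a, b, a', b', q2, x, y]"
  shows "sat D E Ur e (swap_bisim_fm r c c' q a b a' b' q2 x y) = swap_bisim (e c) (e c') (e r)"
proof -
  have "\<And>e. sat D E Ur e (pair_fm q a b x y) = is_pair (e q) (e a) (e b)"
    and "\<And>e. sat D E Ur e (in_rel_fm r a' b' q2 x y) = in_rel (e r) (e a') (e b')"
    by (rule sat_pair_fm sat_in_rel_fm; use assms in auto)+
  then show ?thesis
    using assms unfolding swap_bisim_fm_def back_and_forth_fm_def swap_bisim_def swap_bisim_pair_def
    by (simp add: sat_swap_fm eq_commute[of b' a'])
qed

lemma sat_in_tc_fm:
  assumes "distinct [a, s, t, u, w]"
  shows "sat D E Ur e (in_tc_fm a s t u w) = in_tc (e a) (e s)"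
proof -
  have "\<And>e. sat D E Ur e (transitive_fm t u w) = transitive (e t)"
    by (rule sat_transitive_fm) (use assms in auto)
  then show ?thesis using assms unfolding in_tc_fm_def in_tc_def by (simp add: imp_conjL)
qed

lemma definable_induct_in_set:
  assumes env: "range env \<subseteq> D" and P: "\<And>z. z \<in> D \<Longrightarrow> sat D E Ur (env(0 := z)) \<phi> \<longleftrightarrow> P z"
    and S: "S \<in> D" "\<not> Ur S"
    and step: "\<And>z. z \<in> D \<Longrightarrow> E z S \<Longrightarrow> (\<And>y. y \<in> D \<Longrightarrow> E y z \<Longrightarrow> E y S \<Longrightarrow> P y) \<Longrightarrow> P z"
    and z: "z \<in> D" "E z S"
  shows "P z"
proof (rule ccontr)
  assume "\<not> P z"
  obtain B where B: "B \<in> D" "\<not> Ur B" "\<forall>y\<in>D. E y B \<longleftrightarrow> (E y S \<and> sat D E Ur (env(0 := y)) (Neg \<phi>))"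
    using separation[OF env S, of "Neg \<phi>"] by blast
  have B_iff: "E y B \<longleftrightarrow> E y S \<and> \<not> P y" if "y \<in> D" for y
    using B(3) P that by simp
  obtain m where m: "m \<in> D" "E m B" "\<not> (\<exists>y\<in>D. E y m \<and> E y B)"
    using foundation[OF B(1) z(1)] B_iff z \<open>\<not> P z\<close> by blast
  have "P m" using step[OF m(1)] m B_iff by blast
  then show False using B_iff m(1,2) by blast
qed

lemma in_rel_domain_set:
  assumes "r \<in> D" "\<not> Ur r"
  shows "\<exists>Dm\<in>D. \<not> Ur Dm \<and> (\<forall>a\<in>D. \<forall>b\<in>D. in_rel r a b \<longrightarrow> E a Dm)"
proof -
  obtain U1 where U1: "U1 \<in> D" "\<not> Ur U1" "\<forall>z\<in>D. E z U1 \<longleftrightarrow> (\<exists>y\<in>D. E y r \<and> E z y)"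
    using union[OF assms] by blast
  obtain U2 where U2: "U2 \<in> D" "\<not> Ur U2" "\<forall>z\<in>D. E z U2 \<longleftrightarrow> (\<exists>y\<in>D. E y U1 \<and> E z y)"
    using union[OF U1(1,2)] by blast
  have "E a U2" if ab: "a \<in> D" "b \<in> D" "in_rel r a b" for a b
  proof -
    obtain q where q: "q \<in> D" "E q r" "is_pair q a b" using ab(3) unfolding in_rel_def by blast
    obtain s where s: "s \<in> D" "\<not> Ur s" "\<forall>z\<in>D. E z s \<longleftrightarrow> z = a" using singleton[OF ab(1)] by blast
    have "E s q" using is_pairD[OF q(3) s(1)] s by blast
    then have "E s U1" using U1(3) s(1) q(1,2) by blast
    moreover have "E a s" using s(3) ab(1) by blast
    ultimately show "E a U2" using U2(3) ab(1) s(1) by blast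
  qed
  then show ?thesis using U2(1,2) by blast
qed

end

definition rels_agree_fm :: fm where
  "rels_agree_fm = Neg (Ex 3 (Ex 4 (Conj (in_rel_fm 1 0 3 5 6 7) (Conj (in_rel_fm 2 0 4 5 6 7) (Neg (Equ 3 4))))))"

definition rels_inverse_fm :: fm where
  "rels_inverse_fm = Neg (Ex 3 (Ex 4 (Conj (in_rel_fm 1 0 3 5 6 7) (Conj (in_rel_fm 2 3 4 5 6 7) (Neg (Equ 0 4))))))"

definition maps_to_fm :: fm where
  "maps_to_fm = Ex 4 (Conj (swap_bisim_fm 4 2 3 20 21 22 23 24 25 26 27) (in_rel_fm 4 0 1 5 6 7))"

definition in_domain_fm :: fm where
  "in_domain_fm = Ex 2 (in_rel_fm 1 0 2 3 4 5)"

context zfcu_model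
begin

lemma sat_rels_agree_fm: "sat D E Ur (e(0 := z)) rels_agree_fm \<longleftrightarrow>
    (\<forall>b\<in>D. \<forall>b'\<in>D. in_rel (e 1) z b \<longrightarrow> in_rel (e 2) z b' \<longrightarrow> b = b')"
  unfolding rels_agree_fm_def by (auto simp add: sat_in_rel_fm)

lemma sat_rels_inverse_fm: "sat D E Ur (e(0 := z)) rels_inverse_fm \<longleftrightarrow>
    (\<forall>b\<in>D. \<forall>d\<in>D. in_rel (e 1) z b \<longrightarrow> in_rel (e 2) b d \<longrightarrow> d = z)"
  unfolding rels_inverse_fm_def by (auto simp add: sat_in_rel_fm)

lemma sat_maps_to_fm: "sat D E Ur (e(0 := u, 1 := v)) maps_to_fm \<longleftrightarrow>
    (\<exists>r\<in>D. swap_bisim (e 2) (e 3) r \<and> in_rel r u v)"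
  unfolding maps_to_fm_def by (simp add: sat_in_rel_fm sat_swap_bisim_fm)

lemma sat_in_domain_fm: "sat D E Ur (e(0 := z)) in_domain_fm \<longleftrightarrow> (\<exists>b\<in>D. in_rel (e 1) z b)"
  unfolding in_domain_fm_def by (simp add: sat_in_rel_fm)

end

locale swap_model = zfcu_model +
  fixes c c' :: 'a
  assumes c_D: "c \<in> D" "c' \<in> D" and c_Ur: "Ur c" "Ur c'"
begin

abbreviation bisim :: "'a \<Rightarrow> bool" where
  "bisim r \<equiv> swap_bisim c c' r"

definition maps_to :: "'a \<Rightarrow> 'a \<Rightarrow> bool" where
  "maps_to u w \<longleftrightarrow> (\<exists>r\<in>D. bisim r \<and> in_rel r u w)"

lemma swap_D: "a \<in> D \<Longrightarrow> swap c c' a \<in> D"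
  unfolding swap_def using c_D by auto

lemma swap_Ur: "Ur a \<Longrightarrow> Ur (swap c c' a)"
  unfolding swap_def using c_Ur by auto

lemma bisim_not_Ur: "bisim r \<Longrightarrow> \<not> Ur r"
  unfolding swap_bisim_def by blast

lemma bisimD:
  assumes "bisim r" "in_rel r a b" "a \<in> D" "b \<in> D"
  shows "(Ur a \<longrightarrow> b = swap c c' a) \<and> (\<not> Ur a \<longrightarrow> \<not> Ur b \<and>
     (\<forall>a'\<in>D. E a' a \<longrightarrow> (\<exists>b'\<in>D. E b' b \<and> in_rel r a' b')) \<and>
     (\<forall>b'\<in>D. E b' b \<longrightarrow> (\<exists>a'\<in>D. E a' a \<and> in_rel r a' b')))"
proof -
  obtain q where q: "q \<in> D" "E q r" "is_pair q a b" using assms(2) unfolding in_rel_def by blast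
  obtain a1 b1 where ab1: "a1 \<in> D" "b1 \<in> D" "is_pair q a1 b1"
    "(Ur a1 \<longrightarrow> b1 = swap c c' a1) \<and> (\<not> Ur a1 \<longrightarrow> \<not> Ur b1 \<and>
       (\<forall>a'\<in>D. E a' a1 \<longrightarrow> (\<exists>b'\<in>D. E b' b1 \<and> in_rel r a' b')) \<and>
       (\<forall>b'\<in>D. E b' b1 \<longrightarrow> (\<exists>a'\<in>D. E a' a1 \<and> in_rel r a' b')))"
    using assms(1) q(1,2) unfolding swap_bisim_def swap_bisim_pair_def by blast
  have "a1 = a \<and> b1 = b" using pair_inject[OF q(1) ab1(1,2) assms(3,4) ab1(3) q(3)] .
  then show ?thesis using ab1(4) by blast
qed

lemma bisim_functional:
  assumes r: "r1 \<in> D" "r2 \<in> D" "bisim r1" "bisim r2"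
    and ab: "a \<in> D" "b \<in> D" "b' \<in> D" "in_rel r1 a b" "in_rel r2 a b'"
  shows "b = b'"
proof -
  obtain Dm where Dm: "Dm \<in> D" "\<not> Ur Dm" "\<forall>a\<in>D. \<forall>b\<in>D. in_rel r1 a b \<longrightarrow> E a Dm"
    using in_rel_domain_set[OF r(1) bisim_not_Ur[OF r(3)]] by blast
  let ?P = "\<lambda>z. \<forall>b\<in>D. \<forall>b'\<in>D. in_rel r1 z b \<longrightarrow> in_rel r2 z b' \<longrightarrow> b = b'"
  have "?P a"
  proof (rule definable_induct_in_set[where env = "(\<lambda>_. r1)(2 := r2)" and \<phi> = rels_agree_fm])
    show "range ((\<lambda>_. r1)(2 := r2)) \<subseteq> D" using r by auto
    show "sat D E Ur (((\<lambda>_. r1)(2 := r2))(0 := z)) rels_agree_fm \<longleftrightarrow> ?P z" for z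
      by (simp add: sat_rels_agree_fm)
    fix z assume z: "z \<in> D" and IH: "\<And>y. y \<in> D \<Longrightarrow> E y z \<Longrightarrow> E y Dm \<Longrightarrow> ?P y"
    show "?P z"
    proof (intro ballI impI)
      fix b b' assume b: "b \<in> D" "b' \<in> D" "in_rel r1 z b" "in_rel r2 z b'"
      note at1 = bisimD[OF r(3) b(3) z b(1)] and at2 = bisimD[OF r(4) b(4) z b(2)]
      show "b = b'"
      proof (cases "Ur z")
        case False
        have "E w b \<longleftrightarrow> E w b'" if w: "w \<in> D" for w
        proof
          assume "E w b"
          then obtain y where y: "y \<in> D" "E y z" "in_rel r1 y w" using at1 False w by blast
          then obtain w' where "w' \<in> D" "E w' b'" "in_rel r2 y w'" using at2 False by blast
          then show "E w b'" using IH[OF y(1,2)] Dm(3) y w by blast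
        next
          assume "E w b'"
          then obtain y where y: "y \<in> D" "E y z" "in_rel r2 y w" using at2 False w by blast
          then obtain w' where "w' \<in> D" "E w' b" "in_rel r1 y w'" using at1 False by blast
          then show "E w b" using IH[OF y(1,2)] Dm(3) y w by blast
        qed
        then show ?thesis using extensionality[OF b(1,2)] at1 at2 False by blast
      qed (use at1 at2 in simp)
    qed
  qed (use Dm ab in blast)+
  then show ?thesis using ab by blast
qed

lemma bisim_inverse:
  assumes r: "r1 \<in> D" "r2 \<in> D" "bisim r1" "bisim r2"
    and ab: "a \<in> D" "b \<in> D" "d \<in> D" "in_rel r1 a b" "in_rel r2 b d"
  shows "d = a"
proof -
  obtain Dm where Dm: "Dm \<in> D" "\<not> Ur Dm" "\<forall>a\<in>D. \<forall>b\<in>D. in_rel r1 a b \<longrightarrow> E a Dm"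
    using in_rel_domain_set[OF r(1) bisim_not_Ur[OF r(3)]] by blast
  let ?P = "\<lambda>z. \<forall>b\<in>D. \<forall>d\<in>D. in_rel r1 z b \<longrightarrow> in_rel r2 b d \<longrightarrow> d = z"
  have "?P a"
  proof (rule definable_induct_in_set[where env = "(\<lambda>_. r1)(2 := r2)" and \<phi> = rels_inverse_fm])
    show "range ((\<lambda>_. r1)(2 := r2)) \<subseteq> D" using r by auto
    show "sat D E Ur (((\<lambda>_. r1)(2 := r2))(0 := z)) rels_inverse_fm \<longleftrightarrow> ?P z" for z
      by (simp add: sat_rels_inverse_fm)
    fix z assume z: "z \<in> D" and IH: "\<And>y. y \<in> D \<Longrightarrow> E y z \<Longrightarrow> E y Dm \<Longrightarrow> ?P y"
    show "?P z"
    proof (intro ballI impI)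
      fix b d assume b: "b \<in> D" "d \<in> D" "in_rel r1 z b" "in_rel r2 b d"
      note at1 = bisimD[OF r(3) b(3) z b(1)] and at2 = bisimD[OF r(4) b(4) b(1,2)]
      show "d = z"
      proof (cases "Ur z")
        case True
        then show ?thesis using at1 at2 swap_Ur by auto
      next
        case False
        then have b_set: "\<not> Ur b" using at1 by blast
        have "E w d \<longleftrightarrow> E w z" if w: "w \<in> D" for w
        proof
          assume "E w d"
          then obtain u where u: "u \<in> D" "E u b" "in_rel r2 u w" using at2 b_set w by blast
          then obtain y where y: "y \<in> D" "E y z" "in_rel r1 y u" using at1 False by blast
          then show "E w z" using IH[OF y(1,2)] Dm(3) u w by blast
        next
          assume wz: "E w z"
          then obtain u where u: "u \<in> D" "E u b" "in_rel r1 w u" using at1 False w by blast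
          then obtain u' where "u' \<in> D" "E u' d" "in_rel r2 u u'" using at2 b_set by blast
          then show "E w d" using IH[OF w wz] Dm(3) u w by blast
        qed
        then show ?thesis using extensionality[OF b(2) z] at2 b_set False by blast
      qed
    qed
  qed (use Dm ab in blast)+
  then show ?thesis using ab by blast
qed

lemma maps_to_unique: "u \<in> D \<Longrightarrow> w \<in> D \<Longrightarrow> w' \<in> D \<Longrightarrow> maps_to u w \<Longrightarrow> maps_to u w' \<Longrightarrow> w = w'"
  unfolding maps_to_def using bisim_functional by blast

end

definition local_bisim_fm :: fm where
  "local_bisim_fm = Conj (Neg (Urel 1)) (Ex 4 (Ex 5 (Conj (swap_bisim_fm 4 2 3 20 21 22 23 24 25 26 27)
     (Conj (in_rel_fm 4 0 5 6 7 8) (All 6 (Iff (Mem 6 1) (Conj (Mem 6 4)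
       (Ex 7 (Ex 8 (Conj (pair_fm 6 7 8 9 10) (in_tc_fm 7 0 11 12 13)))))))))))"

definition first_in_tc_fm :: fm where
  "first_in_tc_fm = Ex 2 (Ex 3 (Conj (pair_fm 0 2 3 4 5) (in_tc_fm 2 1 6 7 8)))"

context zfcu_model
begin

definition restricts_to :: "'a \<Rightarrow> 'a \<Rightarrow> 'a \<Rightarrow> bool" where
  "restricts_to u r s \<longleftrightarrow> \<not> Ur s \<and>
     (\<forall>q\<in>D. E q s \<longleftrightarrow> (E q r \<and> (\<exists>a\<in>D. \<exists>b\<in>D. is_pair q a b \<and> in_tc a u)))"

lemma sat_local_bisim_fm: "sat D E Ur (e(0 := u, 1 := s)) local_bisim_fm \<longleftrightarrow>
    (\<exists>r\<in>D. \<exists>w\<in>D. swap_bisim (e 2) (e 3) r \<and> in_rel r u w \<and> restricts_to u r s)"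
  unfolding local_bisim_fm_def restricts_to_def
  by (simp add: sat_in_rel_fm sat_swap_bisim_fm sat_pair_fm sat_in_tc_fm) blast

lemma sat_first_in_tc_fm: "sat D E Ur (e(0 := q)) first_in_tc_fm \<longleftrightarrow>
    (\<exists>a\<in>D. \<exists>b\<in>D. is_pair q a b \<and> in_tc a (e 1))"
  unfolding first_in_tc_fm_def by (simp add: sat_pair_fm sat_in_tc_fm)

end

context swap_model
begin

definition swap_env :: "nat \<Rightarrow> 'a" where
  "swap_env = (\<lambda>_. c)(3 := c')"

lemma range_swap_env: "range swap_env \<subseteq> D"
  unfolding swap_env_def using c_D by auto

lemma sat_maps_to_swap_env: "sat D E Ur (swap_env(0 := u, 1 := w)) maps_to_fm \<longleftrightarrow> maps_to u w"
  unfolding maps_to_def swap_env_def sat_maps_to_fm by simp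

definition local_bisim :: "'a \<Rightarrow> 'a \<Rightarrow> bool" where
  "local_bisim u s \<longleftrightarrow> (\<exists>r\<in>D. \<exists>w\<in>D. bisim r \<and> in_rel r u w \<and> restricts_to u r s)"

lemma sat_local_bisim_swap_env: "sat D E Ur (swap_env(0 := u, 1 := s)) local_bisim_fm \<longleftrightarrow> local_bisim u s"
  unfolding local_bisim_def swap_env_def sat_local_bisim_fm by simp

lemma restriction_exists:
  assumes "r \<in> D" "bisim r" "u \<in> D"
  shows "\<exists>s\<in>D. restricts_to u r s"
proof -
  have "range (\<lambda>_. u) \<subseteq> D" using assms(3) by auto
  from separation[OF this assms(1) bisim_not_Ur[OF assms(2)], of first_in_tc_fm]
  show ?thesis unfolding restricts_to_def by (simp add: sat_first_in_tc_fm)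
qed

lemma restriction_bisim:
  assumes r: "r \<in> D" "bisim r" and s: "restricts_to u r s"
  shows "bisim s"
  unfolding swap_bisim_def
proof (intro conjI ballI impI)
  show "\<not> Ur s" using s unfolding restricts_to_def by blast
  fix q assume q: "q \<in> D" "E q s"
  then obtain a b where ab: "a \<in> D" "b \<in> D" "is_pair q a b" "in_tc a u" and "E q r"
    using s unfolding restricts_to_def by blast
  then have "in_rel r a b" unfolding in_rel_def using q(1) by blast
  note at = bisimD[OF r(2) this ab(1,2)]
  have lift: "in_rel s a' b'" if a': "a' \<in> D" "b' \<in> D" "E a' a" "in_rel r a' b'" for a' b'
  proof -
    obtain q' where q': "q' \<in> D" "E q' r" "is_pair q' a' b'" using a'(4) unfolding in_rel_def by blast
    have "in_tc a' u" using in_tc_member[OF ab(4) ab(1) a'(1,3)] .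
    then have "E q' s" using s q' a'(1,2) unfolding restricts_to_def by blast
    then show ?thesis unfolding in_rel_def using q' by blast
  qed
  have "\<forall>a'\<in>D. E a' a \<longrightarrow> (\<exists>b'\<in>D. E b' b \<and> in_rel s a' b')" if a_set: "\<not> Ur a"
  proof (intro ballI impI)
    fix a' assume a': "a' \<in> D" "E a' a"
    then obtain b' where "b' \<in> D" "E b' b" "in_rel r a' b'" using at a_set by blast
    then show "\<exists>b'\<in>D. E b' b \<and> in_rel s a' b'" using lift a' by blast
  qed
  moreover have "\<forall>b'\<in>D. E b' b \<longrightarrow> (\<exists>a'\<in>D. E a' a \<and> in_rel s a' b')" if a_set: "\<not> Ur a"
  proof (intro ballI impI)
    fix b' assume b': "b' \<in> D" "E b' b"
    then obtain a' where "a' \<in> D" "E a' a" "in_rel r a' b'" using at a_set by blast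
    then show "\<exists>a'\<in>D. E a' a \<and> in_rel s a' b'" using lift b'(1) by blast
  qed
  ultimately show "swap_bisim_pair c c' s q"
    unfolding swap_bisim_pair_def using ab at by blast
qed

lemma in_rel_if_in_tc:
  assumes u: "u \<in> D" "has_tc u" and r: "r \<in> D" "bisim r" "w \<in> D" "in_rel r u w"
    and a: "a \<in> D" "in_tc a u"
  shows "\<exists>b\<in>D. in_rel r a b"
proof -
  obtain t where t: "t \<in> D" "transitive t" "E u t" using u(2) unfolding has_tc_def by blast
  have "range (\<lambda>_. r) \<subseteq> D" using r by auto
  from separation[OF this t(1) transitive_not_Ur[OF t(2)], of in_domain_fm]
  obtain S where S: "S \<in> D" "\<not> Ur S" "\<forall>q\<in>D. E q S \<longleftrightarrow> (E q t \<and> (\<exists>b\<in>D. in_rel r q b))"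
    by (auto simp add: sat_in_domain_fm)
  have "transitive S"
    unfolding is_transitive_def
  proof (intro conjI ballI impI)
    fix y x assume y: "y \<in> D" "E y S" "\<not> Ur y" and x: "x \<in> D" "E x y"
    then obtain b where b: "b \<in> D" "in_rel r y b" "E y t" using S by blast
    have "\<exists>b'\<in>D. in_rel r x b'" using bisimD[OF r(2) b(2) y(1) b(1)] y(3) x by blast
    moreover have "E x t" using transitiveD[OF t(2) y(1) x(1) b(3) x(2)] .
    ultimately show "E x S" using S x(1) by blast
  qed (fact S(2))
  moreover have "E u S" using S u(1) t(3) r(3,4) by blast
  ultimately have "E a S" using a S(1) unfolding in_tc_def by blast
  then show ?thesis using S a(1) by blast
qed

text \<open>Restricting a bisimulation to the pairs whose first entry lies in TC({u}) removes
  every choice made elsewhere, so the result depends only on u.\<close>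

lemma restriction_unique:
  assumes u: "u \<in> D" "has_tc u"
    and r1: "r1 \<in> D" "bisim r1" "w1 \<in> D" "in_rel r1 u w1" "s1 \<in> D" "restricts_to u r1 s1"
    and r2: "r2 \<in> D" "bisim r2" "w2 \<in> D" "in_rel r2 u w2" "s2 \<in> D" "restricts_to u r2 s2"
  shows "s1 = s2"
proof -
  have contained: "E q s'" if
    ra: "ra \<in> D" "bisim ra" and rb: "rb \<in> D" "bisim rb" "wb \<in> D" "in_rel rb u wb"
    and sa: "restricts_to u ra s" and sb: "restricts_to u rb s'" and q: "q \<in> D" "E q s"
    for ra rb wb s s' q
  proof -
    obtain a b where ab: "a \<in> D" "b \<in> D" "is_pair q a b" "in_tc a u" and "E q ra"
      using sa q unfolding restricts_to_def by blast
    then have "in_rel ra a b" unfolding in_rel_def using q(1) by blast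
    obtain b' where b': "b' \<in> D" "in_rel rb a b'" using in_rel_if_in_tc[OF u rb ab(1,4)] by blast
    have "b = b'" using bisim_functional[OF ra(1) rb(1) ra(2) rb(2) ab(1,2) b'(1) \<open>in_rel ra a b\<close> b'(2)] .
    then obtain q' where q': "q' \<in> D" "E q' rb" "is_pair q' a b" using b'(2) unfolding in_rel_def by blast
    have "q' = q" using pair_unique[OF q'(1) q(1) q'(3) ab(3)] .
    then show "E q s'" using sb q' ab unfolding restricts_to_def by blast
  qed
  show ?thesis
  proof (rule extensionality[OF r1(5) r2(5)])
    show "\<not> Ur s1" "\<not> Ur s2" using r1(6) r2(6) unfolding restricts_to_def by blast+
    show "E q s1 \<longleftrightarrow> E q s2" if "q \<in> D" for q
      using contained[OF r1(1,2) r2(1-4) r1(6) r2(6) that] contained[OF r2(1,2) r1(1-4) r2(6) r1(6) that]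
      by blast
  qed
qed

lemma maps_to_urelement: assumes "v \<in> D" "Ur v" shows "maps_to v (swap c c' v)"
proof -
  obtain q where q: "q \<in> D" "is_pair q v (swap c c' v)" using pair_exists[OF assms(1) swap_D[OF assms(1)]] by blast
  obtain r where r: "r \<in> D" "\<not> Ur r" "\<forall>z\<in>D. E z r \<longleftrightarrow> z = q" using singleton[OF q(1)] by blast
  have "bisim r"
    unfolding swap_bisim_def
  proof (intro conjI ballI impI)
    fix q' assume "q' \<in> D" "E q' r"
    then have "q' = q" using r(3) by blast
    then show "swap_bisim_pair c c' r q'"
      unfolding swap_bisim_pair_def using q assms swap_D[OF assms(1)] by blast
  qed (fact r(2))
  moreover have "in_rel r v (swap c c' v)" unfolding in_rel_def using r(3) q by blast
  ultimately show ?thesis unfolding maps_to_def using r(1) by blast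
qed

end

context swap_model
begin

lemma local_bisim_exists: "u \<in> D \<Longrightarrow> w \<in> D \<Longrightarrow> maps_to u w \<Longrightarrow> \<exists>s\<in>D. local_bisim u s"
  unfolding maps_to_def local_bisim_def using restriction_exists by blast

lemma local_bisim_unique:
  "u \<in> D \<Longrightarrow> has_tc u \<Longrightarrow> s \<in> D \<Longrightarrow> s' \<in> D \<Longrightarrow> local_bisim u s \<Longrightarrow> local_bisim u s' \<Longrightarrow> s = s'"
  unfolding local_bisim_def using restriction_unique by blast

lemma local_bisim_bisim: "local_bisim u s \<Longrightarrow> bisim s"
  unfolding local_bisim_def using restriction_bisim by blast

lemma local_bisim_in_rel:
  assumes "u \<in> D" "w \<in> D" "maps_to u w" "local_bisim u s"
  shows "in_rel s u w"
proof -
  obtain r w' where r: "r \<in> D" "w' \<in> D" "bisim r" "in_rel r u w'" "restricts_to u r s"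
    using assms(4) unfolding local_bisim_def by blast
  have "w' = w" using maps_to_unique[OF assms(1) r(2) assms(2) _ assms(3)] r unfolding maps_to_def by blast
  then obtain q where q: "q \<in> D" "E q r" "is_pair q u w" using r(4) unfolding in_rel_def by blast
  then have "E q s" using r(5) assms(1,2) in_tc_refl unfolding restricts_to_def by blast
  then show ?thesis unfolding in_rel_def using q by blast
qed

lemma image_set_exists:
  assumes v: "v \<in> D" "\<not> Ur v" and images: "\<And>u. u \<in> D \<Longrightarrow> E u v \<Longrightarrow> \<exists>w\<in>D. maps_to u w"
  shows "\<exists>W\<in>D. \<not> Ur W \<and> (\<forall>w\<in>D. E w W \<longleftrightarrow> (\<exists>u\<in>D. E u v \<and> maps_to u w))"
proof -
  have "\<exists>w\<in>D. sat D E Ur (swap_env(0 := u, 1 := w)) maps_to_fm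
      \<and> (\<forall>w'\<in>D. sat D E Ur (swap_env(0 := u, 1 := w')) maps_to_fm \<longrightarrow> w' = w)"
    if "u \<in> D" "E u v" for u
    using images[OF that] maps_to_unique[OF that(1)] by (simp only: sat_maps_to_swap_env) blast
  from replacement[OF range_swap_env v this] show ?thesis
    by (simp only: sat_maps_to_swap_env)
qed

lemma local_bisims_set_exists:
  assumes v: "v \<in> D" "\<not> Ur v" "has_tc v" and images: "\<And>u. u \<in> D \<Longrightarrow> E u v \<Longrightarrow> \<exists>w\<in>D. maps_to u w"
  shows "\<exists>R\<in>D. \<not> Ur R \<and> (\<forall>s\<in>D. E s R \<longleftrightarrow> (\<exists>u\<in>D. E u v \<and> local_bisim u s))"
proof -
  have "\<exists>s\<in>D. sat D E Ur (swap_env(0 := u, 1 := s)) local_bisim_fm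
      \<and> (\<forall>s'\<in>D. sat D E Ur (swap_env(0 := u, 1 := s')) local_bisim_fm \<longrightarrow> s' = s)"
    if "u \<in> D" "E u v" for u
    using images[OF that] local_bisim_exists[OF that(1)] local_bisim_unique[OF that(1) has_tc_member[OF v(1) that v(3)]]
    by (simp only: sat_local_bisim_swap_env) blast
  from replacement[OF range_swap_env v(1,2) this] show ?thesis
    by (simp only: sat_local_bisim_swap_env)
qed

text \<open>The union of the local bisimulations of the members of v, extended by the pair (v, W),
  is a bisimulation.\<close>

lemma maps_to_set:
  assumes v: "v \<in> D" "\<not> Ur v" "has_tc v" and images: "\<And>u. u \<in> D \<Longrightarrow> E u v \<Longrightarrow> \<exists>w\<in>D. maps_to u w"
  shows "\<exists>w\<in>D. maps_to v w"
proof -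
  obtain W where W: "W \<in> D" "\<not> Ur W" "\<forall>w\<in>D. E w W \<longleftrightarrow> (\<exists>u\<in>D. E u v \<and> maps_to u w)"
    using image_set_exists[OF v(1,2) images] by blast
  obtain R where R: "R \<in> D" "\<not> Ur R" "\<forall>s\<in>D. E s R \<longleftrightarrow> (\<exists>u\<in>D. E u v \<and> local_bisim u s)"
    using local_bisims_set_exists[OF v images] by blast
  obtain U where U: "U \<in> D" "\<not> Ur U" "\<forall>z\<in>D. E z U \<longleftrightarrow> (\<exists>s\<in>D. E s R \<and> E z s)"
    using union[OF R(1,2)] by blast
  obtain q where q: "q \<in> D" "is_pair q v W" using pair_exists[OF v(1) W(1)] by blast
  obtain S where S: "S \<in> D" "\<not> Ur S" "\<forall>z\<in>D. E z S \<longleftrightarrow> z = q" using singleton[OF q(1)] by blast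
  obtain r where r: "r \<in> D" "\<not> Ur r" "\<forall>z\<in>D. E z r \<longleftrightarrow> (E z U \<or> E z S)"
    using binary_union[OF U(1) S(1) U(2) S(2)] by blast
  have sub: "\<forall>z\<in>D. E z s \<longrightarrow> E z r" if "s \<in> D" "E s R" for s
    using that U(3) r(3) by blast
  have member_in_rel: "in_rel r u w" if uw: "u \<in> D" "E u v" "w \<in> D" "maps_to u w" for u w
  proof -
    obtain s where "s \<in> D" "local_bisim u s"
      using local_bisim_exists[OF uw(1,3,4)] by blast
    then show ?thesis
      using local_bisim_in_rel[OF uw(1,3,4)] in_rel_mono sub R(3) uw(1,2) by blast
  qed
  have "swap_bisim_pair c c' r z" if z: "z \<in> D" "E z r" for z
  proof (cases "E z U")
    case True
    then obtain s where s: "s \<in> D" "E s R" "E z s" using U(3) z(1) by blast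
    then have "bisim s" using R(3) local_bisim_bisim by blast
    then show ?thesis
      using swap_bisim_pair_mono[OF _ sub[OF s(1,2)]] s(3) z(1) unfolding swap_bisim_def by blast
  next
    case False
    then have "z = q" using r(3) S(3) z by blast
    have "\<forall>a'\<in>D. E a' v \<longrightarrow> (\<exists>b'\<in>D. E b' W \<and> in_rel r a' b')"
      using images member_in_rel W(3) by blast
    moreover have "\<forall>b'\<in>D. E b' W \<longrightarrow> (\<exists>a'\<in>D. E a' v \<and> in_rel r a' b')"
      using member_in_rel W(3) by blast
    ultimately show ?thesis
      unfolding swap_bisim_pair_def using \<open>z = q\<close> q v(1,2) W(1,2) by blast
  qed
  then have "bisim r" unfolding swap_bisim_def using r(2) by blast
  moreover have "in_rel r v W" unfolding in_rel_def using r(3) S(3) q by blast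
  ultimately show ?thesis unfolding maps_to_def using W(1) r(1) by blast
qed

lemma maps_to_total:
  assumes z: "z \<in> D" "has_tc z"
  shows "\<exists>w\<in>D. maps_to z w"
proof -
  obtain t where t: "t \<in> D" "transitive t" "E z t" using z(2) unfolding has_tc_def by blast
  show ?thesis
  proof (rule definable_induct_in_set[where env = swap_env and \<phi> = "Ex 1 maps_to_fm" and S = t])
    show "sat D E Ur (swap_env(0 := v)) (Ex 1 maps_to_fm) \<longleftrightarrow> (\<exists>w\<in>D. maps_to v w)" for v
      using sat_maps_to_swap_env by simp
    fix v assume v: "v \<in> D" "E v t" and IH: "\<And>y. y \<in> D \<Longrightarrow> E y v \<Longrightarrow> E y t \<Longrightarrow> \<exists>w\<in>D. maps_to y w"
    show "\<exists>w\<in>D. maps_to v w"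
    proof (cases "Ur v")
      case True
      then show ?thesis using maps_to_urelement[OF v(1)] swap_D[OF v(1)] by blast
    next
      case False
      have "has_tc v" unfolding has_tc_def using t v by blast
      then show ?thesis
        using maps_to_set[OF v(1) False] IH transitiveD[OF t(2) v(1) _ v(2)] by blast
    qed
  qed (use range_swap_env t z transitive_not_Ur in auto)
qed

end

section \<open>The swap automorphism of U^I\<close>

context ideal_model
begin

lemma TC_singleton_in_UI:
  assumes "w \<in> UI" "t \<in> D" "is_TC_singleton D E Ur w t"
  shows "t \<in> UI"
proof -
  have "in_tc v w" if "v \<in> D" "E v t" for v
    using assms(3) that unfolding is_TC_singleton_def in_tc_def by blast
  then show ?thesis
    using set_in_UI_below[OF assms(1,2)] transitive_not_Ur transitive_if_TC_singleton[OF assms(3)] by blast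
qed

end

locale ideal_swap_model = ideal_model + swap_model
begin

text \<open>Off the sets having a transitive closure, sigma is an unspecified value.\<close>

definition sigma :: "'a \<Rightarrow> 'a" where
  "sigma z = (THE w. w \<in> D \<and> maps_to z w)"

lemma sigma_eq: "z \<in> D \<Longrightarrow> w \<in> D \<Longrightarrow> maps_to z w \<Longrightarrow> sigma z = w"
  unfolding sigma_def using maps_to_unique by blast

lemma sigma_D: assumes "z \<in> D" "has_tc z" shows "sigma z \<in> D" "maps_to z (sigma z)"
  using maps_to_total[OF assms] sigma_eq[OF assms(1)] by auto

lemma sigma_urelement: "z \<in> D \<Longrightarrow> Ur z \<Longrightarrow> sigma z = swap c c' z"
  using sigma_eq maps_to_urelement swap_D by blast

lemma sigma_set:
  assumes "z \<in> D" "has_tc z" "\<not> Ur z"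
  shows "\<not> Ur (sigma z)" "\<And>a. a \<in> D \<Longrightarrow> E a z \<Longrightarrow> E (sigma a) (sigma z)"
    "\<And>b. b \<in> D \<Longrightarrow> E b (sigma z) \<Longrightarrow> \<exists>a\<in>D. E a z \<and> sigma a = b"
proof -
  obtain r where r: "r \<in> D" "bisim r" "in_rel r z (sigma z)"
    using sigma_D[OF assms(1,2)] unfolding maps_to_def by blast
  note at = bisimD[OF r(2,3) assms(1) sigma_D(1)[OF assms(1,2)]]
  show "\<not> Ur (sigma z)" using at assms(3) by blast
  show "E (sigma a) (sigma z)" if "a \<in> D" "E a z" for a
    using at assms(3) that sigma_eq unfolding maps_to_def by (metis r(1,2))
  show "\<exists>a\<in>D. E a z \<and> sigma a = b" if "b \<in> D" "E b (sigma z)" for b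
    using at assms(3) that sigma_eq unfolding maps_to_def by (metis r(1,2))
qed

lemma sigma_Ur_iff: "z \<in> D \<Longrightarrow> has_tc z \<Longrightarrow> Ur (sigma z) \<longleftrightarrow> Ur z"
  using sigma_urelement sigma_set(1) swap_Ur by metis

lemma sigma_c: "sigma c = c'"
  using sigma_urelement[OF c_D(1) c_Ur(1)] unfolding swap_def by simp

lemma sigma_UI_ker:
  assumes z: "z \<in> UI"
  shows "sigma z \<in> UI \<and> (\<forall>a. in_ker (sigma z) a \<longrightarrow> in_ker z a \<or> a = c \<or> a = c')"
proof -
  have zD: "z \<in> D" "has_tc z" using UI_D[OF z] UI_has_tc[OF z] by blast+
  obtain t where t: "t \<in> D" "is_TC_singleton D E Ur z t" using TC_singleton_exists[OF zD] by blast
  note tr = transitive_if_TC_singleton[OF t(2)]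
  have t_tc: "has_tc u" if "u \<in> D" "E u t" for u
    unfolding has_tc_def using tr t(1) that by blast
  obtain T where T: "T \<in> D" "\<not> Ur T" "\<forall>w\<in>D. E w T \<longleftrightarrow> (\<exists>u\<in>D. E u t \<and> maps_to u w)"
    using image_set_exists[OF t(1) transitive_not_Ur[OF conjunct1[OF tr]]] maps_to_total t_tc by blast
  have T_iff: "E w T \<longleftrightarrow> (\<exists>u\<in>D. E u t \<and> w = sigma u)" if "w \<in> D" for w
    using T(3) that sigma_eq sigma_D t_tc by metis
  have "transitive T"
    unfolding is_transitive_def
  proof (intro conjI ballI impI)
    fix y x assume y: "y \<in> D" "E y T" "\<not> Ur y" and x: "x \<in> D" "E x y"
    then obtain u where u: "u \<in> D" "E u t" "y = sigma u" using T_iff by blast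
    have "\<not> Ur u" using sigma_Ur_iff[OF u(1) t_tc[OF u(1,2)]] u(3) y(3) by simp
    then obtain a where "a \<in> D" "E a u" "sigma a = x"
      using sigma_set(3)[OF u(1) t_tc[OF u(1,2)]] x u(3) by blast
    moreover have "E a t" using transitiveD[OF conjunct1[OF tr] u(1)] calculation u(2) by blast
    ultimately show "E x T" using T_iff[OF x(1)] by blast
  qed (fact T(2))
  moreover have "E (sigma z) T" using T_iff[OF sigma_D(1)[OF zD]] zD(1) tr by blast
  ultimately have "has_tc (sigma z)" unfolding has_tc_def using T(1) by blast
  moreover have ker: "\<forall>a. in_ker (sigma z) a \<longrightarrow> in_ker z a \<or> a = c \<or> a = c'"
  proof (intro allI impI)
    fix a assume a: "in_ker (sigma z) a"
    have "E a T" using a \<open>transitive T\<close> \<open>E (sigma z) T\<close> T(1) unfolding in_ker_def in_tc_def by blast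
    then obtain u where u: "u \<in> D" "E u t" "a = sigma u" using T_iff in_kerD[OF a] by blast
    then have "Ur u" using sigma_Ur_iff[OF u(1) t_tc[OF u(1,2)]] in_kerD[OF a] by simp
    then have "in_ker z u" and "a = swap c c' u"
      using in_ker_iff_TC_singleton[OF t] u sigma_urelement by blast+
    then show "in_ker z a \<or> a = c \<or> a = c'" unfolding swap_def by auto
  qed
  moreover have "small (in_ker (sigma z))"
    using small_mono[OF small_union[OF UI_small[OF z] small_union[OF small_singleton[OF c_D(1) c_Ur(1)]
        small_singleton[OF c_D(2) c_Ur(2)]]]] ker by blast
  ultimately show ?thesis using UI_iff sigma_D(1)[OF zD] by blast
qed

lemma sigma_UI: "z \<in> UI \<Longrightarrow> sigma z \<in> UI"
  using sigma_UI_ker by blast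

lemma sigma_sigma: assumes "z \<in> UI" shows "sigma (sigma z) = z"
proof -
  have z: "z \<in> D" "has_tc z" using UI_D[OF assms] UI_has_tc[OF assms] by blast+
  have s: "sigma z \<in> D" "has_tc (sigma z)" using sigma_UI[OF assms] UI_D UI_has_tc by blast+
  obtain r1 where r1: "r1 \<in> D" "bisim r1" "in_rel r1 z (sigma z)"
    using sigma_D(2)[OF z] unfolding maps_to_def by blast
  obtain r2 where r2: "r2 \<in> D" "bisim r2" "in_rel r2 (sigma z) (sigma (sigma z))"
    using sigma_D(2)[OF s] unfolding maps_to_def by blast
  show ?thesis using bisim_inverse[OF r1(1) r2(1) r1(2) r2(2) z(1) s(1) sigma_D(1)[OF s] r1(3) r2(3)] .
qed

lemma sigma_mem_iff: assumes "z \<in> UI" "s \<in> UI" shows "E (sigma s) (sigma z) \<longleftrightarrow> E s z"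
proof
  show "E s z \<Longrightarrow> E (sigma s) (sigma z)"
    using sigma_set(2)[OF UI_D[OF assms(1)] UI_has_tc[OF assms(1)]] UI_D[OF assms(2)]
      not_Ur_if_member[OF UI_D[OF assms(1)] UI_D[OF assms(2)]] by blast
  have u: "sigma z \<in> UI" "sigma s \<in> UI" using sigma_UI assms by blast+
  assume "E (sigma s) (sigma z)"
  then have "E (sigma (sigma s)) (sigma (sigma z))"
    using sigma_set(2)[OF UI_D[OF u(1)] UI_has_tc[OF u(1)]] UI_D[OF u(2)]
      not_Ur_if_member[OF UI_D[OF u(1)] UI_D[OF u(2)]] by blast
  then show "E s z" using sigma_sigma assms by simp
qed

lemma sigma_Ur_iff_UI: "z \<in> UI \<Longrightarrow> Ur (sigma z) \<longleftrightarrow> Ur z"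
  using sigma_Ur_iff UI_D UI_has_tc by blast

lemma sigma_eq_iff: "z \<in> UI \<Longrightarrow> s \<in> UI \<Longrightarrow> sigma z = sigma s \<longleftrightarrow> z = s"
  using sigma_sigma by metis

end

context ideal_swap_model
begin

lemma sigma_fixed:
  assumes z: "z \<in> UI" and no_c: "\<not> in_ker z c" "\<not> in_ker z c'"
  shows "sigma z = z"
proof -
  have zD: "z \<in> D" "has_tc z" using UI_D[OF z] UI_has_tc[OF z] by blast+
  obtain t where t: "t \<in> D" "is_TC_singleton D E Ur z t" using TC_singleton_exists[OF zD] by blast
  note tr = transitive_if_TC_singleton[OF t(2)]
  have t_tc: "has_tc u" if "u \<in> D" "E u t" for u
    unfolding has_tc_def using tr t(1) that by blast
  let ?P = "\<lambda>v. \<forall>w\<in>D. maps_to v w \<longrightarrow> w = v"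
  have "?P z"
  proof (rule definable_induct_in_set[where env = swap_env and \<phi> = "All 1 (Imp maps_to_fm (Equ 1 0))"])
    show "sat D E Ur (swap_env(0 := v)) (All 1 (Imp maps_to_fm (Equ 1 0))) \<longleftrightarrow> ?P v" for v
      using sat_maps_to_swap_env by simp
    fix v assume v: "v \<in> D" "E v t" and IH: "\<And>y. y \<in> D \<Longrightarrow> E y v \<Longrightarrow> E y t \<Longrightarrow> ?P y"
    have IH': "sigma y = y" if "y \<in> D" "E y v" for y
      using IH[OF that transitiveD[OF conjunct1[OF tr] v(1) that(1) v(2) that(2)]]
        sigma_D[OF that(1) t_tc[OF that(1)]] transitiveD[OF conjunct1[OF tr] v(1) that(1) v(2) that(2)]
      by metis
    have "sigma v = v"
    proof (cases "Ur v")
      case True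
      then have "in_ker z v" using in_ker_iff_TC_singleton[OF t] v by blast
      then show ?thesis using sigma_urelement[OF v(1) True] no_c unfolding swap_def by auto
    next
      case False
      note v_set = sigma_set[OF v(1) t_tc[OF v] False]
      show ?thesis
      proof (rule extensionality[OF sigma_D(1)[OF v(1) t_tc[OF v]] v(1) v_set(1) False])
        fix y assume "y \<in> D"
        then show "E y (sigma v) \<longleftrightarrow> E y v" using v_set(2,3) IH' by metis
      qed
    qed
    then show "?P v" using sigma_eq[OF v(1)] by metis
  qed (use range_swap_env t tr zD transitive_not_Ur in auto)
  then show ?thesis using sigma_D[OF zD] by metis
qed

lemma in_ker_sigma:
  assumes z: "z \<in> UI" and a: "in_ker z a"
  shows "in_ker (sigma z) (sigma a)"
proof -
  have aD: "a \<in> D" "Ur a" using in_kerD[OF a] by blast+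
  have aU: "a \<in> UI" using urelement_in_UI[OF aD] .
  have wU: "sigma z \<in> UI" using sigma_UI[OF z] .
  obtain t where t: "t \<in> D" "is_TC_singleton D E Ur (sigma z) t"
    using TC_singleton_exists[OF UI_D[OF wU] UI_has_tc[OF wU]] by blast
  note tr = transitive_if_TC_singleton[OF t(2)]
  have tU: "t \<in> UI" using TC_singleton_in_UI[OF wU t] .
  have "transitive (sigma t)"
    unfolding is_transitive_def
  proof (intro conjI ballI impI)
    show "\<not> Ur (sigma t)" using sigma_Ur_iff_UI[OF tU] transitive_not_Ur tr by blast
    fix y x assume y: "y \<in> D" "E y (sigma t)" and x: "x \<in> D" "E x y"
    have yU: "y \<in> UI" using UI_member[OF sigma_UI[OF tU] y] .
    have xU: "x \<in> UI" using UI_member[OF yU x] .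
    have "E (sigma y) t" using sigma_mem_iff[OF sigma_UI[OF tU] yU] y(2) sigma_sigma[OF tU] by simp
    moreover have "E (sigma x) (sigma y)" using sigma_mem_iff[OF yU xU] x(2) by simp
    ultimately have "E (sigma x) t"
      using transitiveD[OF conjunct1[OF tr] UI_D[OF sigma_UI[OF yU]] UI_D[OF sigma_UI[OF xU]]] by blast
    then show "E x (sigma t)" using sigma_mem_iff[OF tU sigma_UI[OF xU]] sigma_sigma[OF xU] by simp
  qed
  moreover have "E z (sigma t)"
    using sigma_mem_iff[OF tU wU] tr sigma_sigma[OF z] by simp
  ultimately have "E a (sigma t)" using a UI_D[OF sigma_UI[OF tU]] unfolding in_ker_def in_tc_def by blast
  then have "E (sigma a) t" using sigma_mem_iff[OF sigma_UI[OF tU] aU] sigma_sigma[OF tU] by simp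
  moreover have "sigma a \<in> D" "Ur (sigma a)" using UI_D[OF sigma_UI[OF aU]] sigma_Ur_iff_UI[OF aU] aD(2) by blast+
  ultimately show ?thesis using in_ker_iff_TC_singleton[OF t] by blast
qed

lemma sat_sigma: "range env \<subseteq> UI \<Longrightarrow> sat UI E Ur (sigma \<circ> env) q \<longleftrightarrow> sat UI E Ur env q"
proof (induction q arbitrary: env)
  case (Mem i j)
  have "env i \<in> UI" "env j \<in> UI" using Mem.prems by (auto simp del: fun_upd_apply)
  then show ?case using sigma_mem_iff by simp
next
  case (Equ i j)
  have "env i \<in> UI" "env j \<in> UI" using Equ.prems by (auto simp del: fun_upd_apply)
  then show ?case using sigma_eq_iff by simp
next
  case (Urel i)
  have "env i \<in> UI" using Urel.prems by (auto simp del: fun_upd_apply)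
  then show ?case using sigma_Ur_iff_UI by simp
next
  case (Ex i q)
  have step: "sat UI E Ur ((sigma \<circ> env)(i := d)) q \<longleftrightarrow> sat UI E Ur (env(i := sigma d)) q"
    if "d \<in> UI" for d
  proof -
    have "(sigma \<circ> env)(i := d) = sigma \<circ> (env(i := sigma d))"
      using sigma_sigma[OF that] by (auto simp: fun_eq_iff)
    then show ?thesis
      using Ex.IH[OF range_fun_upd_subset[OF Ex.prems sigma_UI[OF that]]] by (simp only:)
  qed
  show ?case
  proof
    assume "sat UI E Ur (sigma \<circ> env) (Ex i q)"
    then obtain d where "d \<in> UI" "sat UI E Ur ((sigma \<circ> env)(i := d)) q"
      by (simp only: sat.simps) blast
    then show "sat UI E Ur env (Ex i q)"
      using step sigma_UI by (simp only: sat.simps) blast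
  next
    assume "sat UI E Ur env (Ex i q)"
    then obtain d where d: "d \<in> UI" "sat UI E Ur (env(i := d)) q"
      by (simp only: sat.simps) blast
    then have "sat UI E Ur ((sigma \<circ> env)(i := sigma d)) q"
      using step[OF sigma_UI[OF d(1)]] sigma_sigma[OF d(1)] by simp
    then show "sat UI E Ur (sigma \<circ> env) (Ex i q)"
      using sigma_UI[OF d(1)] by (simp only: sat.simps) blast
  qed
qed simp_all

end

section \<open>Replacement\<close>

context ideal_model
begin

lemma ideal_swap_modelI: "a \<in> D \<Longrightarrow> b \<in> D \<Longrightarrow> Ur a \<Longrightarrow> Ur b \<Longrightarrow> ideal_swap_model D E Ur \<psi> p a b"
  unfolding ideal_swap_model_def swap_model_def swap_model_axioms_def
  using ideal_model_axioms zfcu_model_axioms by (auto simp: ideal_model_def)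

lemma small_ker_params:
  "finite F \<Longrightarrow> (\<And>i. i \<in> F \<Longrightarrow> env i \<in> UI) \<Longrightarrow> small (\<lambda>a. \<exists>i\<in>F. in_ker (env i) a)"
proof (induction F rule: finite_induct)
  case empty
  then show ?case using small_mono[OF small_empty] by auto
next
  case (insert j F)
  then have "small (\<lambda>a. in_ker (env j) a \<or> (\<exists>i\<in>F. in_ker (env i) a))"
    using small_union UI_small by blast
  then show ?case using small_mono by fastforce
qed

text \<open>The symmetry argument: if an urelement a in the kernel of v lay outside P, swapping a
  with a fresh urelement c' would fix u and the parameters, hence fix the unique v, while moving
  a to c'.\<close>

lemma definable_value_ker_bound:
  assumes env: "range env \<subseteq> UI" and u: "u \<in> UI" and v: "v \<in> UI" "sat UI E Ur (env(0 := u, 1 := v)) \<phi>"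
    and unique: "\<And>v'. v' \<in> UI \<Longrightarrow> sat UI E Ur (env(0 := u, 1 := v')) \<phi> \<Longrightarrow> v' = v"
    and P: "small P" "\<And>a. in_ker u a \<Longrightarrow> P a" "\<And>i a. i \<in> fv \<phi> - {0, 1} \<Longrightarrow> in_ker (env i) a \<Longrightarrow> P a"
    and a: "in_ker v a"
  shows "P a"
proof (rule ccontr)
  assume "\<not> P a"
  obtain c' where c': "c' \<in> D" "Ur c'" "\<not> P c'" "\<not> in_ker v c'"
    using small_not_all_Ur[OF small_union[OF P(1) UI_small[OF v(1)]]] by blast
  interpret ideal_swap_model D E Ur \<psi> p a c'
    using ideal_swap_modelI in_kerD[OF a] c'(1,2) by blast
  have fixed: "sigma w = w" if "w \<in> UI" "\<And>b. in_ker w b \<Longrightarrow> P b" for w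
    using sigma_fixed[OF that(1)] that(2) \<open>\<not> P a\<close> c'(3) by blast
  have "range (env(0 := u, 1 := v)) \<subseteq> UI"
    using range_fun_upd_subset[OF range_fun_upd_subset[OF env u] v(1)] .
  then have "sat UI E Ur (sigma \<circ> env(0 := u, 1 := v)) \<phi>" using sat_sigma v(2) by blast
  moreover have "(sigma \<circ> env(0 := u, 1 := v)) i = (env(0 := u, 1 := sigma v)) i" if "i \<in> fv \<phi>" for i
    using fixed[OF u P(2)] fixed[OF _ P(3)] env that by (auto simp: image_subset_iff)
  ultimately have "sat UI E Ur (env(0 := u, 1 := sigma v)) \<phi>" using sat_cong_fv by blast
  then have "sigma v = v" using unique sigma_UI[OF v(1)] by blast
  moreover have "in_ker (sigma v) (sigma a)" using in_ker_sigma[OF v(1) a] .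
  ultimately show False using sigma_c c'(4) by simp
qed

definition replacement_fm :: "fm \<Rightarrow> fm" where
  "replacement_fm \<phi> = Ex 3 (Conj (Equ 3 1) (Conj (in_UI_fm \<psi> 3) (relativize \<psi> \<phi>)))"

lemma sat_replacement_fm:
  assumes env: "range env \<subseteq> UI" and "u \<in> UI" "v \<in> D"
  shows "sat D E Ur ((lift_env env)(0 := u, 1 := v)) (replacement_fm \<phi>) \<longleftrightarrow>
    v \<in> UI \<and> sat UI E Ur (env(0 := u, 1 := v)) \<phi>"
proof -
  define e where "e = (lift_env env)(0 := u, 1 := v, 3 := v)"
  have e: "carries_params e"
    unfolding e_def using carries_params_upd lift_env_carries_params by simp
  have e_3: "(\<lambda>i. e (3 * i)) = env(0 := u, 1 := v)"
    unfolding e_def lift_env_def by (auto simp: fun_eq_iff)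
  have "sat D E Ur ((lift_env env)(0 := u, 1 := v)) (replacement_fm \<phi>) \<longleftrightarrow>
      sat D E Ur e (in_UI_fm \<psi> 3) \<and> sat D E Ur e (relativize \<psi> \<phi>)"
    unfolding replacement_fm_def e_def using assms(3) by auto
  moreover have "sat D E Ur e (in_UI_fm \<psi> 3) \<longleftrightarrow> v \<in> UI"
    using sat_in_UI_fm[OF e, of 3] assms(3) unfolding e_def by simp
  moreover have "sat D E Ur e (relativize \<psi> \<phi>) \<longleftrightarrow> sat UI E Ur (env(0 := u, 1 := v)) \<phi>" if "v \<in> UI"
  proof -
    have "range (env(0 := u, 1 := v)) \<subseteq> UI"
      using range_fun_upd_subset[OF range_fun_upd_subset[OF env assms(2)] that] .
    then have "\<forall>i. e (3 * i) \<in> UI" using e_3 by (metis rangeI subsetD)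
    then show ?thesis using sat_relativize[OF e] e_3 by metis
  qed
  ultimately show ?thesis by blast
qed

lemma UI_replacement: "ax_replacement UI E Ur"
  unfolding ax_replacement_def
proof (intro allI impI ballI)
  fix \<phi> :: fm and env :: "nat \<Rightarrow> 'a" and x
  assume env: "range env \<subseteq> UI" and x: "x \<in> UI" "\<not> Ur x"
    and functional: "\<forall>u\<in>UI. E u x \<longrightarrow> (\<exists>v\<in>UI. sat UI E Ur (env(0 := u, 1 := v)) \<phi>
      \<and> (\<forall>v'\<in>UI. sat UI E Ur (env(0 := u, 1 := v')) \<phi> \<longrightarrow> v' = v))"
  have xD: "x \<in> D" using UI_D[OF x(1)] .
  note sat_repl = sat_replacement_fm[OF env]
  have "\<exists>v\<in>D. sat D E Ur ((lift_env env)(0 := u, 1 := v)) (replacement_fm \<phi>)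
      \<and> (\<forall>v'\<in>D. sat D E Ur ((lift_env env)(0 := u, 1 := v')) (replacement_fm \<phi>) \<longrightarrow> v' = v)"
    if "u \<in> D" "E u x" for u
    using functional UI_member[OF x(1) that] sat_repl[OF UI_member[OF x(1) that]] that(2) UI_D by metis
  from replacement[OF range_lift_env[OF env] xD x(2) this]
  obtain y where y: "y \<in> D" "\<not> Ur y"
    "\<forall>v\<in>D. E v y \<longleftrightarrow> (\<exists>u\<in>D. E u x \<and> sat D E Ur ((lift_env env)(0 := u, 1 := v)) (replacement_fm \<phi>))"
    by blast
  have y_iff: "E v y \<longleftrightarrow> (\<exists>u\<in>UI. E u x \<and> v \<in> UI \<and> sat UI E Ur (env(0 := u, 1 := v)) \<phi>)"
    if "v \<in> D" for v
    using y(3) that sat_repl UI_member[OF x(1)] UI_D by blast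
  let ?P = "\<lambda>a. in_ker x a \<or> (\<exists>i\<in>fv \<phi> - {0, 1}. in_ker (env i) a)"
  have "small ?P"
    using small_union[OF UI_small[OF x(1)] small_ker_params[of "fv \<phi> - {0, 1}" env]] finite_fv env by blast
  have "y \<in> UI"
  proof (rule set_in_UI[OF y(1,2) _ \<open>small ?P\<close>])
    fix v assume "v \<in> D" "E v y"
    then obtain u where u: "u \<in> UI" "E u x" and v: "v \<in> UI" "sat UI E Ur (env(0 := u, 1 := v)) \<phi>"
      using y_iff by blast
    have "v' = v" if "v' \<in> UI" "sat UI E Ur (env(0 := u, 1 := v')) \<phi>" for v'
      using functional u that v by metis
    then have "in_ker v a \<Longrightarrow> ?P a" for a
      using definable_value_ker_bound[OF env u(1) v, of ?P] \<open>small ?P\<close> in_ker_member[OF xD UI_D[OF u(1)] u(2)]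
      by blast
    then show "v \<in> UI \<and> (\<forall>a. in_ker v a \<longrightarrow> ?P a)" using v(1) by blast
  qed
  then show "\<exists>y\<in>UI. \<not> Ur y \<and> (\<forall>v\<in>UI. E v y \<longleftrightarrow> (\<exists>u\<in>UI. E u x \<and> sat UI E Ur (env(0 := u, 1 := v)) \<phi>))"
    using y(2) y_iff UI_D by blast
qed

lemma UI_ZFCU_R: "ZFCU_R UI E Ur"
  unfolding ZFCU_R_def
  using UI_nonempty UI_urelements UI_extensionality UI_foundation UI_pairing UI_union UI_powerset
    UI_infinity UI_separation UI_replacement UI_choice by blast

end

theorem mainTheorem10:
  fixes D :: "'a set" and E :: "'a \<Rightarrow> 'a \<Rightarrow> bool" and Ur :: "'a \<Rightarrow> bool"
    and \<psi> :: fm and p :: "nat \<Rightarrow> 'a"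
  assumes "ZFCU_R D E Ur"
    and "range p \<subseteq> D"
    and "is_A_ideal D E Ur (\<lambda>k. sat D E Ur (p(0 := k)) \<psi>)"
  shows "ZFCU_R (U_I D E Ur (\<lambda>k. sat D E Ur (p(0 := k)) \<psi>)) E Ur
       \<and> A_proper_class (U_I D E Ur (\<lambda>k. sat D E Ur (p(0 := k)) \<psi>)) E Ur"
proof -
  interpret ideal_model D E Ur \<psi> p
    using assms by (unfold_locales) auto
  show ?thesis using UI_ZFCU_R UI_A_proper_class by blast
qed

end
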